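(* Let $\mathcal A\subseteq B(\mathcal H)$ be a unital w*-closed algebra and $(\mathcal A,\{\alpha_i\}_{i\in[d]})$ a w*-dynamical system such that each $\alpha_i$ is implemented by an invertible row operator $u_i=[u_{i,j}]_{j\in[n_i]}$ (with inverse $[v_{i,j}]^t$), i.e. $\alpha_i(a)=\sum_ju_{i,j}av_{i,j}$. Then the w*-closed linear spans $\overline{\operatorname{span}}^{w*}\{V_{\mathbf w}\rho(y):\mathbf w\in\mathbb F_+^N,y\in\mathcal A'\}$ and $\overline{\operatorname{span}}^{w*}\{W_{\mathbf w}\rho(y):\mathbf w\in\mathbb F_+^N,y\in\mathcal A'\}$ coincide with the w*-closed algebras generated by $\{V_{\mathbf w}\rho(y):\mathbf w\in\mathbb F_+^N,y\in\mathcal A'\}$ and by $\{W_{\mathbf w}\rho(y):\mathbf w\in\mathbb F_+^N,y\in\mathcal A'\}$, respectively.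
   Context: $d\in\{1,2,\dots\}\cup\{\infty\}$, $[d]=\{1,\dots,d\}$, $\mathbb F_+^d$ free semigroup on $[d]$, $\bar\nu$ the reverse word; on $\ell^2(\mathbb F_+^d)$, $\mathfrak l_ie_w=e_{iw}$ and $\mathfrak r_ie_w=e_{wi}$; on $\mathcal H\otimes\ell^2(\mathbb F_+^d)$, $\rho(x)=x\otimes I$. A row $u_i=[u_{i,j}]_{j\in[n_i]}$ is invertible if there is a bounded column $[v_{i,j}]^t$ with $v_{i,j}u_{i,k}=\delta_{jk}I$ and $\sum_ju_{i,j}v_{i,j}=I$. A w*-dynamical system: the $\alpha_i$ are unital w*-continuous completely bounded endomorphisms of $\mathcal A$ with $\sup_\mu\|\alpha_\mu\|<\infty$. $\mathbb F_+^N$ denotes the free semigroup on generators $(i,j)$, $i\in[d]$, $j\in[n_i]$, with unit $\varnothing$. $V_{(i,j)}=u_{i,j}\otimes\mathfrak l_i$, $W_{(i,j)}=u_{i,j}\otimes\mathfrak r_i$, and for $\mathbf w=\mathbf w_k\cdots\mathbf w_1\in\mathbb F_+^N$, $V_{\mathbf w}=V_{\mathbf w_k}\cdots V_{\mathbf w_1}$, $W_{\mathbf w}=W_{\mathbf w_k}\cdots W_{\mathbf w_1}$ ($=I$ for $\varnothing$). These spans are denoted $\mathcal A'\times_u\mathcal L_d$ and $\mathcal A'\times_u\mathcal R_d$. *)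

theory Defs
  imports "HOL-Analysis.Analysis" "HOL-Library.Extended_Nat"
begin

type_synonym 'a vec = "'a \<Rightarrow> complex"
type_synonym ('a, 'b) op = "'a vec \<Rightarrow> 'b vec"

definition ell2 :: "'a set \<Rightarrow> 'a vec set" where
  "ell2 A = {f. (\<forall>x. x \<notin> A \<longrightarrow> f x = 0) \<and> (\<lambda>x. (cmod (f x))^2) summable_on UNIV}"

definition ip :: "'a vec \<Rightarrow> 'a vec \<Rightarrow> complex" where
  "ip f g = infsum (\<lambda>x. cnj (f x) * g x) UNIV"

definition norm2 :: "'a vec \<Rightarrow> real" where
  "norm2 f = sqrt (infsum (\<lambda>x. (cmod (f x))^2) UNIV)"

(* bounded linear operators l^2(A) -> l^2(B); normalised to be 0 off l^2(A) *)
definition bop :: "'a set \<Rightarrow> 'b set \<Rightarrow> ('a,'b) op \<Rightarrow> bool" where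
  "bop A B T \<longleftrightarrow>
     (\<forall>f \<in> ell2 A. T f \<in> ell2 B) \<and>
     (\<forall>f \<in> ell2 A. \<forall>g \<in> ell2 A. T (\<lambda>x. f x + g x) = (\<lambda>y. T f y + T g y)) \<and>
     (\<forall>f \<in> ell2 A. \<forall>c. T (\<lambda>x. c * f x) = (\<lambda>y. c * T f y)) \<and>
     (\<exists>C. \<forall>f \<in> ell2 A. norm2 (T f) \<le> C * norm2 f) \<and>
     (\<forall>f. f \<notin> ell2 A \<longrightarrow> T f = (\<lambda>_. 0))"

definition Bop :: "'a set \<Rightarrow> ('a,'a) op set" where
  "Bop A = {T. bop A A T}"

definition idop :: "'a set \<Rightarrow> ('a,'a) op" where
  "idop A = (\<lambda>f. if f \<in> ell2 A then f else (\<lambda>_. 0))"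

definition ozero :: "('a,'b) op" where
  "ozero = (\<lambda>f x. 0)"

definition oadd :: "('a,'b) op \<Rightarrow> ('a,'b) op \<Rightarrow> ('a,'b) op" where
  "oadd S T = (\<lambda>f x. S f x + T f x)"

definition oscale :: "complex \<Rightarrow> ('a,'b) op \<Rightarrow> ('a,'b) op" where
  "oscale c T = (\<lambda>f x. c * T f x)"

definition opnorm :: "'a set \<Rightarrow> ('a,'b) op \<Rightarrow> real" where
  "opnorm A T = Sup {norm2 (T f) | f. f \<in> ell2 A \<and> norm2 f \<le> 1}"

definition normal_pair :: "'a set \<Rightarrow> (nat \<Rightarrow> 'a vec) \<Rightarrow> (nat \<Rightarrow> 'a vec) \<Rightarrow> bool" where
  "normal_pair A \<xi> \<eta> \<longleftrightarrow> (\<forall>k. \<xi> k \<in> ell2 A \<and> \<eta> k \<in> ell2 A) \<and>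
     summable (\<lambda>k. (norm2 (\<xi> k))^2) \<and> summable (\<lambda>k. (norm2 (\<eta> k))^2)"

definition nfun :: "(nat \<Rightarrow> 'a vec) \<Rightarrow> (nat \<Rightarrow> 'a vec) \<Rightarrow> ('a,'a) op \<Rightarrow> complex" where
  "nfun \<xi> \<eta> T = (\<Sum>k. ip (\<xi> k) (T (\<eta> k)))"

definition wstar :: "'a set \<Rightarrow> ('a,'a) op topology" where
  "wstar A = topology_generated_by
     {{T \<in> Bop A. nfun \<xi> \<eta> T \<in> U} | \<xi> \<eta> U. open U \<and> normal_pair A \<xi> \<eta>}"

definition subalg :: "'a set \<Rightarrow> ('a,'a) op set \<Rightarrow> bool" where
  "subalg A S \<longleftrightarrow> S \<subseteq> Bop A \<and> ozero \<in> S \<and>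
     (\<forall>a\<in>S. \<forall>b\<in>S. oadd a b \<in> S \<and> a \<circ> b \<in> S) \<and> (\<forall>c. \<forall>a\<in>S. oscale c a \<in> S)"

definition unital_wstar_alg :: "'a set \<Rightarrow> ('a,'a) op set \<Rightarrow> bool" where
  "unital_wstar_alg A S \<longleftrightarrow> subalg A S \<and> idop A \<in> S \<and> closedin (wstar A) S"

definition commutant :: "'a set \<Rightarrow> ('a,'a) op set \<Rightarrow> ('a,'a) op set" where
  "commutant A S = {y \<in> Bop A. \<forall>a\<in>S. y \<circ> a = a \<circ> y}"

inductive_set ospan :: "('a,'b) op set \<Rightarrow> ('a,'b) op set" for G where
  ospan_zero: "ozero \<in> ospan G"
| ospan_step: "S \<in> ospan G \<Longrightarrow> T \<in> G \<Longrightarrow> oadd (oscale c T) S \<in> ospan G"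

definition wspan :: "'a set \<Rightarrow> ('a,'a) op set \<Rightarrow> ('a,'a) op set" where
  "wspan A G = wstar A closure_of ospan G"

definition walg :: "'a set \<Rightarrow> ('a,'a) op set \<Rightarrow> ('a,'a) op set" where
  "walg A G = \<Inter> {S. G \<subseteq> S \<and> subalg A S \<and> closedin (wstar A) S}"

(* [d] = {1,...,d}, or {1,2,...} when d = infinity *)
definition idx :: "enat \<Rightarrow> nat set" where
  "idx d = {i. 1 \<le> i \<and> enat i \<le> d}"

(* F_+^d : words over [d]; the word w_1 ... w_k is the list [w_1,...,w_k] *)
definition words :: "enat \<Rightarrow> nat list set" where
  "words d = lists (idx d)"

definition Nwords :: "enat \<Rightarrow> (nat \<Rightarrow> enat) \<Rightarrow> (nat \<times> nat) list set" where
  "Nwords d n = lists {(i,j). i \<in> idx d \<and> j \<in> idx (n i)}"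

(* j-th coordinate embedding H -> H^(n) = l^2(X x [n]) *)
definition inj :: "nat \<Rightarrow> ('x, 'x \<times> nat) op" where
  "inj j = (\<lambda>g. if g \<in> ell2 UNIV then (\<lambda>(x,k). if k = j then g x else 0) else (\<lambda>_. 0))"

(* u_{i,j} = U_i o inj_j, where U_i : H^(n_i) -> H is the row [u_{i,j}]_j *)
definition entry :: "(nat \<Rightarrow> ('x \<times> nat, 'x) op) \<Rightarrow> nat \<Rightarrow> nat \<Rightarrow> ('x,'x) op" where
  "entry U i j = U i \<circ> inj j"

(* a (x) I_J on l^2(X x J) *)
definition amp :: "nat set \<Rightarrow> ('x,'x) op \<Rightarrow> ('x \<times> nat, 'x \<times> nat) op" where
  "amp J a = (\<lambda>f. if f \<in> ell2 (UNIV \<times> J)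
      then (\<lambda>(x,j). if j \<in> J then a (\<lambda>x'. f (x',j)) x else 0) else (\<lambda>_. 0))"

(* alpha_i(a) = sum_j u_{i,j} a v_{i,j} = U_i (a (x) I) V_i *)
definition alpha :: "(nat \<Rightarrow> enat) \<Rightarrow> (nat \<Rightarrow> ('x \<times> nat, 'x) op) \<Rightarrow> (nat \<Rightarrow> ('x, 'x \<times> nat) op)
    \<Rightarrow> nat \<Rightarrow> ('x,'x) op \<Rightarrow> ('x,'x) op" where
  "alpha n U V i a = U i \<circ> amp (idx (n i)) a \<circ> V i"

definition alpha_word :: "(nat \<Rightarrow> enat) \<Rightarrow> (nat \<Rightarrow> ('x \<times> nat, 'x) op) \<Rightarrow> (nat \<Rightarrow> ('x, 'x \<times> nat) op)
    \<Rightarrow> nat list \<Rightarrow> ('x,'x) op \<Rightarrow> ('x,'x) op" where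
  "alpha_word n U V \<mu> = foldr (\<lambda>i g. alpha n U V i \<circ> g) \<mu> id"

definition matop :: "nat \<Rightarrow> (nat \<Rightarrow> nat \<Rightarrow> ('x,'x) op) \<Rightarrow> ('x \<times> nat, 'x \<times> nat) op" where
  "matop m M = (\<lambda>f. if f \<in> ell2 (UNIV \<times> {..<m})
      then (\<lambda>(x,k). if k < m then (\<Sum>l<m. M k l (\<lambda>x'. f (x',l)) x) else 0) else (\<lambda>_. 0))"

definition unital_endo :: "('x,'x) op set \<Rightarrow> (('x,'x) op \<Rightarrow> ('x,'x) op) \<Rightarrow> bool" where
  "unital_endo S \<phi> \<longleftrightarrow> (\<forall>a\<in>S. \<phi> a \<in> S) \<and>
     (\<forall>a\<in>S. \<forall>b\<in>S. \<phi> (oadd a b) = oadd (\<phi> a) (\<phi> b) \<and> \<phi> (a \<circ> b) = \<phi> a \<circ> \<phi> b) \<and>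
     (\<forall>c. \<forall>a\<in>S. \<phi> (oscale c a) = oscale c (\<phi> a)) \<and>
     \<phi> (idop UNIV) = idop UNIV"

definition wstar_continuous :: "('x,'x) op set \<Rightarrow> (('x,'x) op \<Rightarrow> ('x,'x) op) \<Rightarrow> bool" where
  "wstar_continuous S \<phi> \<longleftrightarrow>
     continuous_map (subtopology (wstar UNIV) S) (subtopology (wstar UNIV) S) \<phi>"

definition completely_bounded :: "('x,'x) op set \<Rightarrow> (('x,'x) op \<Rightarrow> ('x,'x) op) \<Rightarrow> bool" where
  "completely_bounded S \<phi> \<longleftrightarrow> (\<exists>C. \<forall>m M. (\<forall>k<m. \<forall>l<m. M k l \<in> S) \<longrightarrow>
      opnorm (UNIV \<times> {..<m}) (matop m (\<lambda>k l. \<phi> (M k l)))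
        \<le> C * opnorm (UNIV \<times> {..<m}) (matop m M))"

(* u (x) l_i,  l_i e_w = e_{iw} *)
definition tensl :: "enat \<Rightarrow> nat \<Rightarrow> ('x,'x) op \<Rightarrow> ('x \<times> nat list, 'x \<times> nat list) op" where
  "tensl d i u = (\<lambda>f. if f \<in> ell2 (UNIV \<times> words d)
      then (\<lambda>(x,w'). case w' of [] \<Rightarrow> 0 | k # w \<Rightarrow> if k = i then u (\<lambda>x'. f (x',w)) x else 0)
      else (\<lambda>_. 0))"

(* u (x) r_i,  r_i e_w = e_{wi} *)
definition tensr :: "enat \<Rightarrow> nat \<Rightarrow> ('x,'x) op \<Rightarrow> ('x \<times> nat list, 'x \<times> nat list) op" where
  "tensr d i u = (\<lambda>f. if f \<in> ell2 (UNIV \<times> words d)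
      then (\<lambda>(x,w'). if w' \<noteq> [] \<and> last w' = i then u (\<lambda>x'. f (x', butlast w')) x else 0)
      else (\<lambda>_. 0))"

(* rho(y) = y (x) I *)
definition rho :: "enat \<Rightarrow> ('x,'x) op \<Rightarrow> ('x \<times> nat list, 'x \<times> nat list) op" where
  "rho d y = (\<lambda>f. if f \<in> ell2 (UNIV \<times> words d)
      then (\<lambda>(x,w). y (\<lambda>x'. f (x',w)) x) else (\<lambda>_. 0))"

(* V_w = V_{w_k} ... V_{w_1} for w = w_k ... w_1 (list [w_k,...,w_1]); V_{(i,j)} = u_{i,j} (x) l_i *)
definition Vw :: "enat \<Rightarrow> (nat \<Rightarrow> ('x \<times> nat, 'x) op) \<Rightarrow> (nat \<times> nat) list
    \<Rightarrow> ('x \<times> nat list, 'x \<times> nat list) op" where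
  "Vw d U ws = foldr (\<lambda>(i,j) T. tensl d i (entry U i j) \<circ> T) ws (idop (UNIV \<times> words d))"

(* W_w = W_{w_k} ... W_{w_1}; W_{(i,j)} = u_{i,j} (x) r_i *)
definition Ww :: "enat \<Rightarrow> (nat \<Rightarrow> ('x \<times> nat, 'x) op) \<Rightarrow> (nat \<times> nat) list
    \<Rightarrow> ('x \<times> nat list, 'x \<times> nat list) op" where
  "Ww d U ws = foldr (\<lambda>(i,j) T. tensr d i (entry U i j) \<circ> T) ws (idop (UNIV \<times> words d))"

end

theory Submission
  imports Defs
begin

text \<open>
  The generators \<open>X\<^sub>w \<rho>(y)\<close> (\<open>X = V\<close> or \<open>X = W\<close>, \<open>y \<in> \<A>'\<close>) span a w*-closed algebra as soon
  as the product of any two of them lies in their w*-closed span, because multiplication is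
  separately w*-continuous. In such a product \<open>\<rho>(y)\<close> is moved to the right through \<open>X\<^bsub>w'\<^esub>\<close>
  one letter at a time: \<open>\<rho>(y) X\<^sub>(\<^sub>i\<^sub>,\<^sub>j\<^sub>)\<close> is the shift along the letter \<open>i\<close> of \<open>y u\<^sub>i\<^sub>,\<^sub>j\<close>, and the
  invertibility of the row \<open>u\<^sub>i\<close> gives \<open>y u\<^sub>i\<^sub>,\<^sub>j = \<Sum>\<^sub>k u\<^sub>i\<^sub>,\<^sub>k (v\<^sub>i\<^sub>,\<^sub>k y u\<^sub>i\<^sub>,\<^sub>j)\<close> with
  w*-convergent partial sums. Each \<open>v\<^sub>i\<^sub>,\<^sub>k y u\<^sub>i\<^sub>,\<^sub>j\<close> again commutes with \<open>\<A>\<close>: since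
  \<open>\<alpha>\<^sub>i(\<A>) \<subseteq> \<A>\<close>, \<open>y\<close> commutes with \<open>\<alpha>\<^sub>i(a) = \<Sum>\<^sub>l u\<^sub>i\<^sub>,\<^sub>l a v\<^sub>i\<^sub>,\<^sub>l\<close>, and
  \<open>\<alpha>\<^sub>i(a) u\<^sub>i\<^sub>,\<^sub>j = u\<^sub>i\<^sub>,\<^sub>j a\<close>, \<open>v\<^sub>i\<^sub>,\<^sub>k \<alpha>\<^sub>i(a) = a v\<^sub>i\<^sub>,\<^sub>k\<close>.
\<close>

section \<open>Infinite sums\<close>

lemma integrable_count_space_iff_summable:
  fixes h :: "'a \<Rightarrow> complex"
  shows "integrable (count_space UNIV) h \<longleftrightarrow> (\<lambda>x. cmod (h x)) summable_on UNIV"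
  using abs_summable_equivalent[of h UNIV] unfolding abs_summable_on_def by simp

lemma infsum_eq_lebesgue_integral:
  fixes h :: "'a \<Rightarrow> complex"
  assumes "(\<lambda>x. cmod (h x)) summable_on UNIV"
  shows "infsum h UNIV = integral\<^sup>L (count_space UNIV) h"
  using infsetsum_infsum[of h UNIV] assms abs_summable_equivalent[of h UNIV]
  unfolding infsetsum_def by simp

lemma infsum_dominated_convergence:
  fixes f :: "nat \<Rightarrow> 'a \<Rightarrow> complex" and g :: "'a \<Rightarrow> complex" and h :: "'a \<Rightarrow> real"
  assumes h: "h summable_on UNIV" and bnd: "\<And>m x. cmod (f m x) \<le> h x"
    and lim: "\<And>x. (\<lambda>m. f m x) \<longlonglongrightarrow> g x"
  shows "(\<lambda>m. infsum (f m) UNIV) \<longlonglongrightarrow> infsum g UNIV"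
proof -
  have hn: "\<And>x. h x \<ge> 0" using bnd[of 0] norm_ge_zero order_trans by blast
  have h_norm: "(\<lambda>x. norm (h x)) summable_on UNIV" using h hn by simp
  have hi: "integrable (count_space UNIV) (\<lambda>x. h x)"
    using abs_summable_equivalent[of h UNIV] h_norm unfolding abs_summable_on_def by simp
  have A: "integrable M g \<and> (\<forall>i. integrable M (f i)) \<and> ((\<lambda>i. integral\<^sup>L M (f i)) \<longlonglongrightarrow> integral\<^sup>L M g)"
    if M: "M = count_space UNIV" for M
    using integrable_dominated_convergence[of g M f h] integrable_dominated_convergence2[of g M f h]
      integral_dominated_convergence[of g M f h] hi lim bnd M by auto
  have sg: "(\<lambda>x. cmod (g x)) summable_on UNIV"
    using A[OF refl] integrable_count_space_iff_summable by blast
  have sf: "\<And>m. (\<lambda>x. cmod (f m x)) summable_on UNIV"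
    using A[OF refl] integrable_count_space_iff_summable by blast
  show ?thesis
    using A[OF refl] by (simp add: infsum_eq_lebesgue_integral[OF sg] infsum_eq_lebesgue_integral[OF sf])
qed

lemma norm_infsum_le_dominating:
  fixes f :: "'a \<Rightarrow> complex"
  assumes h: "h summable_on UNIV" and b: "\<And>x. cmod (f x) \<le> h x"
  shows "cmod (infsum f UNIV) \<le> infsum h UNIV"
proof -
  have s: "(\<lambda>x. norm (f x)) summable_on UNIV"
    by (rule summable_on_comparison_test[OF h]) (use b in auto)
  have "cmod (infsum f UNIV) \<le> infsum (\<lambda>x. norm (f x)) UNIV"
    by (rule norm_infsum_bound) (use s in simp)
  also have "\<dots> \<le> infsum h UNIV" by (rule infsum_mono[OF s h]) (use b in simp)
  finally show ?thesis .
qed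

lemma infsum_ge_term:
  fixes f :: "'a \<Rightarrow> real"
  assumes s: "f summable_on UNIV" and n: "\<And>x. f x \<ge> 0"
  shows "f k \<le> infsum f UNIV"
proof -
  have "infsum f {k} \<le> infsum f UNIV" by (rule infsum_mono2[OF _ s]) (use n in auto)
  thus ?thesis by simp
qed

lemma summable_on_finite_support:
  fixes g :: "'a \<Rightarrow> 'b::{comm_monoid_add,topological_space}"
  shows "finite F \<Longrightarrow> (\<And>x. x \<notin> F \<Longrightarrow> g x = 0) \<Longrightarrow> g summable_on UNIV"
  using summable_on_cong_neutral[of UNIV F g g] by auto

lemma infsum_finite_support:
  fixes g :: "'a \<Rightarrow> 'b::{comm_monoid_add,t2_space}"
  shows "finite F \<Longrightarrow> (\<And>x. x \<notin> F \<Longrightarrow> g x = 0) \<Longrightarrow> infsum g UNIV = sum g F"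
  using infsum_cong_neutral[of UNIV F g g] by auto

lemma summable_on_reindex_range:
  fixes g :: "'a \<Rightarrow> 'c::{comm_monoid_add,topological_space}"
  assumes inj: "inj_on \<sigma> UNIV" and z: "\<And>w'. w' \<notin> range \<sigma> \<Longrightarrow> g w' = 0"
  shows "g summable_on UNIV \<longleftrightarrow> (\<lambda>w. g (\<sigma> w)) summable_on UNIV"
proof -
  have "g summable_on UNIV \<longleftrightarrow> g summable_on range \<sigma>"
    by (rule summable_on_cong_neutral) (use z in auto)
  also have "\<dots> \<longleftrightarrow> (g \<circ> \<sigma>) summable_on UNIV" by (rule summable_on_reindex) (use inj in simp)
  finally show ?thesis by (simp add: o_def)
qed

lemma infsum_reindex_range:
  fixes g :: "'a \<Rightarrow> 'c::{comm_monoid_add,t2_space}"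
  assumes inj: "inj_on \<sigma> UNIV" and z: "\<And>w'. w' \<notin> range \<sigma> \<Longrightarrow> g w' = 0"
  shows "infsum g UNIV = infsum (\<lambda>w. g (\<sigma> w)) UNIV"
proof -
  have "infsum g UNIV = infsum g (range \<sigma>)"
    by (rule infsum_cong_neutral) (use z in auto)
  also have "\<dots> = infsum (g \<circ> \<sigma>) UNIV" by (rule infsum_reindex) (use inj in simp)
  finally show ?thesis by (simp add: o_def)
qed

lemma summable_on_UNIV_swap:
  "g summable_on UNIV \<Longrightarrow> (\<lambda>(w,x). g (x,w)) summable_on UNIV"
  using summable_on_swap[of g UNIV UNIV] by simp

lemma infsum_swap_prod:
  fixes g :: "'x \<times> 'w \<Rightarrow> 'c::banach"
  assumes g: "g summable_on UNIV"
  shows "infsum g UNIV = infsum (\<lambda>w. infsum (\<lambda>x. g (x,w)) UNIV) UNIV"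
proof -
  have b: "bij_betw prod.swap (UNIV :: ('w \<times> 'x) set) UNIV"
    by (auto simp: bij_betw_def inj_on_def image_def intro!: exI[of _ "prod.swap _"])
  have s: "(\<lambda>(w,x). g (x,w)) summable_on (Sigma UNIV (\<lambda>_. UNIV))"
    using summable_on_UNIV_swap[OF g] by simp
  have "infsum (\<lambda>w. infsum (\<lambda>x. g (x,w)) UNIV) UNIV = infsum (\<lambda>(w,x). g (x,w)) (Sigma UNIV (\<lambda>_. UNIV))"
    using infsum_Sigma_banach[OF s] by simp
  also have "\<dots> = infsum (\<lambda>p. g (prod.swap p)) (UNIV :: ('w \<times> 'x) set)"
    by (simp add: case_prod_unfold prod.swap_def)
  also have "\<dots> = infsum g UNIV" by (rule infsum_reindex_bij_betw[OF b])
  finally show ?thesis by simp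
qed

lemma summable_on_prod_slice:
  fixes g :: "'x \<times> 'w \<Rightarrow> 'c::{banach,complete_uniform_space,uniform_topological_group_add}"
  assumes g: "g summable_on UNIV"
  shows "(\<lambda>x. g (x,w)) summable_on UNIV"
proof -
  have s: "(\<lambda>(w,x). g (x,w)) summable_on (Sigma UNIV (\<lambda>_. UNIV))"
    using summable_on_UNIV_swap[OF g] by simp
  show ?thesis using summable_on_SigmaD1[of "\<lambda>w x. g (x,w)", OF s] by simp
qed

lemma summable_on_prod_outer:
  fixes g :: "'x \<times> 'w \<Rightarrow> 'c::{banach,complete_uniform_space,uniform_topological_group_add}"
  assumes g: "g summable_on UNIV"
  shows "(\<lambda>w. infsum (\<lambda>x. g (x,w)) UNIV) summable_on UNIV"
proof -
  have s: "(\<lambda>(w,x). g (x,w)) summable_on (Sigma UNIV (\<lambda>_. UNIV))"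
    using summable_on_UNIV_swap[OF g] by simp
  have "(\<lambda>w. infsum (\<lambda>x. (\<lambda>(w,x). g (x,w)) (w, x)) UNIV) summable_on UNIV"
    by (rule summable_on_SigmaD[OF s]) (use summable_on_prod_slice[OF g] in simp)
  thus ?thesis by simp
qed

section \<open>Square-summable functions\<close>

lemma ell2_summable: "f \<in> ell2 A \<Longrightarrow> (\<lambda>x. (cmod (f x))^2) summable_on UNIV"
  by (simp add: ell2_def)

lemma ell2_vanishes: "f \<in> ell2 A \<Longrightarrow> x \<notin> A \<Longrightarrow> f x = 0"
  by (simp add: ell2_def)

lemma ell2I: "(\<And>x. x \<notin> A \<Longrightarrow> f x = 0) \<Longrightarrow> (\<lambda>x. (cmod (f x))^2) summable_on UNIV \<Longrightarrow> f \<in> ell2 A"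
  by (simp add: ell2_def)

lemma ell2_zero[simp]: "(\<lambda>_. 0) \<in> ell2 A"
  by (simp add: ell2_def)

lemma cmod_add_sq_le: "(cmod (a + b))^2 \<le> 2 * (cmod a)^2 + 2 * (cmod b)^2"
proof -
  have "cmod (a+b) \<le> cmod a + cmod b" by (rule norm_triangle_ineq)
  hence "(cmod (a+b))^2 \<le> (cmod a + cmod b)^2" by (simp add: power_mono)
  also have "\<dots> \<le> 2 * (cmod a)^2 + 2 * (cmod b)^2"
  proof -
    have "(cmod a + cmod b)^2 = (cmod a)^2 + 2*cmod a*cmod b + (cmod b)^2" by (simp add: power2_sum)
    with sum_squares_bound[of "cmod a" "cmod b"] show ?thesis by linarith
  qed
  finally show ?thesis .
qed

lemma ell2_add: "f \<in> ell2 A \<Longrightarrow> g \<in> ell2 A \<Longrightarrow> (\<lambda>x. f x + g x) \<in> ell2 A"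
proof (rule ell2I)
  assume f: "f \<in> ell2 A" and g: "g \<in> ell2 A"
  show "x \<notin> A \<Longrightarrow> f x + g x = 0" for x using f g by (simp add: ell2_vanishes)
  have "(\<lambda>x. 2 * (cmod (f x))^2 + 2 * (cmod (g x))^2) summable_on UNIV"
    using f g by (intro summable_on_add summable_on_cmult_right ell2_summable)
  then show "(\<lambda>x. (cmod (f x + g x))^2) summable_on UNIV"
    by (rule summable_on_comparison_test) (auto simp: cmod_add_sq_le)
qed

lemma ell2_scale: "f \<in> ell2 A \<Longrightarrow> (\<lambda>x. c * f x) \<in> ell2 A"
proof (rule ell2I)
  assume f: "f \<in> ell2 A"
  show "x \<notin> A \<Longrightarrow> c * f x = 0" for x using f by (simp add: ell2_vanishes)
  have "(\<lambda>x. (cmod c)^2 * (cmod (f x))^2) summable_on UNIV"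
    using f by (intro summable_on_cmult_right ell2_summable)
  then show "(\<lambda>x. (cmod (c * f x))^2) summable_on UNIV"
    by (simp add: norm_mult power_mult_distrib)
qed

lemma ell2_diff: "f \<in> ell2 A \<Longrightarrow> g \<in> ell2 A \<Longrightarrow> (\<lambda>x. f x - g x) \<in> ell2 A"
  using ell2_add[of f A "\<lambda>x. (-1) * g x"] ell2_scale[of g A "-1"] by simp

lemma ell2_dominated:
  assumes g: "g \<in> ell2 A" and le: "\<And>x. cmod (f x) \<le> cmod (g x)" and out: "\<And>x. x \<notin> A \<Longrightarrow> f x = 0"
  shows "f \<in> ell2 A"
proof (rule ell2I[OF out])
  show "(\<lambda>x. (cmod (f x))^2) summable_on UNIV"
    by (rule summable_on_comparison_test[OF ell2_summable[OF g]]) (auto simp: le power_mono)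
qed

lemma norm2_sq_eq: "f \<in> ell2 A \<Longrightarrow> (norm2 f)^2 = infsum (\<lambda>x. (cmod (f x))^2) UNIV"
  unfolding norm2_def by (simp add: infsum_nonneg)

lemma norm2_nonneg[simp]: "norm2 f \<ge> 0"
  unfolding norm2_def by (auto intro!: infsum_nonneg)

lemma norm2_zero[simp]: "norm2 (\<lambda>_. 0) = 0"
  by (simp add: norm2_def)

lemma norm2_mono: "g \<in> ell2 A \<Longrightarrow> f \<in> ell2 B \<Longrightarrow> (\<And>x. cmod (f x) \<le> cmod (g x)) \<Longrightarrow> norm2 f \<le> norm2 g"
  unfolding norm2_def
  by (intro real_sqrt_le_mono infsum_mono ell2_summable) (auto intro: power_mono)

lemma norm2_scale: "norm2 (\<lambda>x. c * f x) = cmod c * norm2 f"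
  unfolding norm2_def
  by (simp add: norm_mult power_mult_distrib infsum_cmult_right' real_sqrt_mult)

lemma norm2_eq_0D: "f \<in> ell2 A \<Longrightarrow> norm2 f = 0 \<Longrightarrow> f x = 0"
proof -
  assume f: "f \<in> ell2 A" and z: "norm2 f = 0"
  have "infsum (\<lambda>x. (cmod (f x))^2) UNIV = 0" using norm2_sq_eq[OF f] z by simp
  hence "(cmod (f x))^2 = 0"
    by (intro nonneg_infsum_le_0D[OF _ ell2_summable[OF f]]) auto
  thus ?thesis by simp
qed

lemma cmod_mult_le_half_sq: "cmod a * cmod b \<le> (1/2) * ((cmod a)^2 + (cmod b)^2)"
proof -
  have "2 * (cmod a * cmod b) \<le> (cmod a)^2 + (cmod b)^2"
    using sum_squares_bound[of "cmod a" "cmod b"] by (simp add: mult.assoc)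
  thus ?thesis by (simp add: field_simps)
qed

lemma ip_abs_summable: "f \<in> ell2 A \<Longrightarrow> g \<in> ell2 B \<Longrightarrow> (\<lambda>x. cmod (f x) * cmod (g x)) summable_on UNIV"
proof -
  assume f: "f \<in> ell2 A" and g: "g \<in> ell2 B"
  have "(\<lambda>x. (1/2) * ((cmod (f x))^2 + (cmod (g x))^2)) summable_on UNIV"
    using f g by (intro summable_on_cmult_right summable_on_add ell2_summable)
  then show ?thesis by (rule summable_on_comparison_test) (rule cmod_mult_le_half_sq, simp)
qed

lemma ip_summable: "f \<in> ell2 A \<Longrightarrow> g \<in> ell2 B \<Longrightarrow> (\<lambda>x. cnj (f x) * g x) summable_on UNIV"
  unfolding summable_on_iff_abs_summable_on_complex using ip_abs_summable[of f A g B] by (simp add: norm_mult)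

lemma ip_add_right: "f \<in> ell2 A \<Longrightarrow> g \<in> ell2 B \<Longrightarrow> h \<in> ell2 B \<Longrightarrow>
    ip f (\<lambda>x. g x + h x) = ip f g + ip f h"
  unfolding ip_def using ip_summable[of f A g B] ip_summable[of f A h B]
  by (simp add: distrib_left infsum_add)

lemma ip_scale_right: "ip f (\<lambda>x. c * g x) = c * ip f g"
  unfolding ip_def by (simp add: infsum_cmult_right' mult.left_commute)

lemma ip_diff_right: "f \<in> ell2 A \<Longrightarrow> g \<in> ell2 B \<Longrightarrow> h \<in> ell2 B \<Longrightarrow>
    ip f (\<lambda>x. g x - h x) = ip f g - ip f h"
  using ip_add_right[of f A g B "\<lambda>x. (-1) * h x"] ell2_scale[of h B "-1"] ip_scale_right[where c="-1" and f=f and g=h]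
  by simp

lemma ip_scale_left: "ip (\<lambda>x. c * f x) g = cnj c * ip f g"
  unfolding ip_def by (simp add: infsum_cmult_right' mult.assoc)

lemma ip_zero_right[simp]: "ip f (\<lambda>_. 0) = 0"
  by (simp add: ip_def)

lemma ip_zero_left[simp]: "ip (\<lambda>_. 0) f = 0"
  by (simp add: ip_def)

lemma ip_cnj: "ip g f = cnj (ip f g)"
  unfolding ip_def by (subst infsum_cnj[symmetric]) (simp add: mult.commute)

lemma cmod_ip_le_infsum: "f \<in> ell2 A \<Longrightarrow> g \<in> ell2 B \<Longrightarrow>
    cmod (ip f g) \<le> infsum (\<lambda>x. cmod (f x) * cmod (g x)) UNIV"
  unfolding ip_def
  by (rule order_trans[OF norm_infsum_bound]) (use ip_abs_summable[of f A g B] in \<open>auto simp: norm_mult\<close>)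

lemma cmod_ip_le_half_norm2: "f \<in> ell2 A \<Longrightarrow> g \<in> ell2 B \<Longrightarrow>
    cmod (ip f g) \<le> (1/2) * ((norm2 f)^2 + (norm2 g)^2)"
proof -
  assume f: "f \<in> ell2 A" and g: "g \<in> ell2 B"
  have s: "(\<lambda>x. (1/2) * ((cmod (f x))^2 + (cmod (g x))^2)) summable_on UNIV"
    by (intro summable_on_cmult_right summable_on_add ell2_summable[OF f] ell2_summable[OF g])
  have "cmod (ip f g) \<le> infsum (\<lambda>x. cmod (f x) * cmod (g x)) UNIV" by (rule cmod_ip_le_infsum[OF f g])
  also have "\<dots> \<le> infsum (\<lambda>x. (1/2) * ((cmod (f x))^2 + (cmod (g x))^2)) UNIV"
    by (rule infsum_mono[OF ip_abs_summable[OF f g] s]) (rule cmod_mult_le_half_sq)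
  also have "\<dots> = (1/2) * (infsum (\<lambda>x. (cmod (f x))^2) UNIV + infsum (\<lambda>x. (cmod (g x))^2) UNIV)"
    by (simp only: infsum_cmult_right' infsum_add[OF ell2_summable[OF f] ell2_summable[OF g]])
  also have "\<dots> = (1/2) * ((norm2 f)^2 + (norm2 g)^2)"
    by (simp add: norm2_sq_eq[OF f] norm2_sq_eq[OF g])
  finally show ?thesis .
qed

lemma cmod_ip_le_norm2: "f \<in> ell2 A \<Longrightarrow> g \<in> ell2 B \<Longrightarrow> cmod (ip f g) \<le> norm2 f * norm2 g"
proof -
  assume f: "f \<in> ell2 A" and g: "g \<in> ell2 B"
  show ?thesis
  proof (cases "norm2 f = 0 \<or> norm2 g = 0")
    case True
    then show ?thesis
    proof
      assume "norm2 f = 0"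
      hence "f = (\<lambda>_. 0)" using norm2_eq_0D[OF f] by auto
      thus ?thesis by simp
    next
      assume "norm2 g = 0"
      hence "g = (\<lambda>_. 0)" using norm2_eq_0D[OF g] by auto
      thus ?thesis by simp
    qed
  next
    case False
    define a where "a = norm2 f"
    define b where "b = norm2 g"
    have a: "a > 0" and b: "b > 0" using False norm2_nonneg a_def b_def by (auto simp: less_le)
    define t where "t = sqrt (b / a)"
    have t: "t > 0" using a b by (simp add: t_def)
    have t2: "t^2 = b / a" using a b by (simp add: t_def)
    have e: "ip (\<lambda>x. complex_of_real t * f x) (\<lambda>x. complex_of_real (1/t) * g x)
       = cnj (complex_of_real t) * (complex_of_real (1/t) * ip f g)"
      by (simp only: ip_scale_left ip_scale_right)
    have "ip f g = ip (\<lambda>x. complex_of_real t * f x) (\<lambda>x. complex_of_real (1/t) * g x)"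
      unfolding e using t by simp
    also have "cmod \<dots> \<le> (1/2) * ((norm2 (\<lambda>x. complex_of_real t * f x))^2 + (norm2 (\<lambda>x. complex_of_real (1/t) * g x))^2)"
      by (rule cmod_ip_le_half_norm2[OF ell2_scale[OF f] ell2_scale[OF g]])
    also have "\<dots> = (1/2) * (t^2 * a^2 + b^2 / t^2)"
      using t by (simp only: norm2_scale, simp add: a_def b_def power_mult_distrib power_divide norm_divide)
    also have "\<dots> = a * b"
      using a b t t2 by (simp add: field_simps power2_eq_square)
    finally show ?thesis by (simp add: a_def b_def)
  qed
qed

lemma norm2_add_le: assumes f: "f \<in> ell2 A" and g: "g \<in> ell2 A"
  shows "norm2 (\<lambda>x. f x + g x) \<le> 2 * (norm2 f + norm2 g)"
proof -
  have s: "(\<lambda>x. 2 * (cmod (f x))^2 + 2 * (cmod (g x))^2) summable_on UNIV"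
    by (intro summable_on_add summable_on_cmult_right ell2_summable[OF f] ell2_summable[OF g])
  have "(norm2 (\<lambda>x. f x + g x))^2 = infsum (\<lambda>x. (cmod (f x + g x))^2) UNIV"
    by (rule norm2_sq_eq[OF ell2_add[OF f g]])
  also have "\<dots> \<le> infsum (\<lambda>x. 2 * (cmod (f x))^2 + 2 * (cmod (g x))^2) UNIV"
    by (rule infsum_mono[OF ell2_summable[OF ell2_add[OF f g]] s]) (rule cmod_add_sq_le)
  also have "\<dots> = 2 * (norm2 f)^2 + 2 * (norm2 g)^2"
    by (simp only: infsum_add summable_on_cmult_right ell2_summable[OF f] ell2_summable[OF g] infsum_cmult_right'
        norm2_sq_eq[OF f] norm2_sq_eq[OF g])
  also have "\<dots> \<le> (2 * (norm2 f + norm2 g))^2"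
    by (simp add: power2_eq_square algebra_simps)
  finally show ?thesis
    by (rule power2_le_imp_le) simp
qed

definition delta :: "'a \<Rightarrow> 'a vec" where "delta x = (\<lambda>y. if y = x then 1 else 0)"

definition trunc :: "'a set \<Rightarrow> 'a vec \<Rightarrow> 'a vec" where "trunc F c = (\<lambda>y. if y \<in> F then c y else 0)"

lemma trunc_ell2: "finite F \<Longrightarrow> F \<subseteq> A \<Longrightarrow> trunc F c \<in> ell2 A"
  by (rule ell2I) (auto simp: trunc_def intro!: summable_on_finite_support)

lemma delta_ell2: "x \<in> A \<Longrightarrow> delta x \<in> ell2 A"
  using trunc_ell2[of "{x}" A "\<lambda>_. 1"] by (simp add: trunc_def delta_def)

lemma norm2_trunc: "finite F \<Longrightarrow> (norm2 (trunc F c))^2 = (\<Sum>x\<in>F. (cmod (c x))^2)"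
proof -
  assume F: "finite F"
  have "(norm2 (trunc F c))^2 = infsum (\<lambda>x. (cmod (trunc F c x))^2) UNIV"
    by (rule norm2_sq_eq[OF trunc_ell2[OF F subset_refl]])
  also have "\<dots> = (\<Sum>x\<in>F. (cmod (trunc F c x))^2)"
    by (rule infsum_finite_support[OF F]) (simp add: trunc_def)
  finally show ?thesis by (simp add: trunc_def)
qed

lemma ell2_finsum: "finite F \<Longrightarrow> (\<And>x. x \<in> F \<Longrightarrow> g x \<in> ell2 B) \<Longrightarrow> (\<lambda>z. \<Sum>x\<in>F. c x * g x z) \<in> ell2 B"
proof (induction F rule: finite_induct)
  case empty
  then show ?case by simp
next
  case (insert a F)
  then show ?case by (simp add: ell2_add ell2_scale)
qed

lemma ip_sum_right: assumes f: "f \<in> ell2 A" shows "finite F \<Longrightarrow> (\<And>x. x \<in> F \<Longrightarrow> g x \<in> ell2 B) \<Longrightarrow>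
   ip f (\<lambda>z. \<Sum>x\<in>F. c x * g x z) = (\<Sum>x\<in>F. c x * ip f (g x))"
proof (induction F rule: finite_induct)
  case empty
  then show ?case by simp
next
  case (insert a F)
  have "ip f (\<lambda>z. \<Sum>x\<in>insert a F. c x * g x z) = ip f (\<lambda>z. c a * g a z + (\<Sum>x\<in>F. c x * g x z))"
    using insert by simp
  also have "\<dots> = ip f (\<lambda>z. c a * g a z) + ip f (\<lambda>z. \<Sum>x\<in>F. c x * g x z)"
    using insert f by (intro ip_add_right[of f A _ B]) (auto intro!: ell2_scale ell2_finsum)
  finally show ?case using insert by (simp add: ip_scale_right)
qed

lemma infsum_tail_eq: assumes f: "f \<in> ell2 A" and F: "finite F"
  shows "infsum (\<lambda>x. if x \<in> F then 0 else (cmod (f x))^2) UNIV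
     = infsum (\<lambda>x. (cmod (f x))^2) UNIV - sum (\<lambda>x. (cmod (f x))^2) F"
proof -
  have s1: "(\<lambda>x. if x \<in> F then (cmod (f x))^2 else 0) summable_on UNIV"
    by (rule summable_on_finite_support[OF F]) auto
  have s2: "(\<lambda>x. if x \<in> F then 0 else (cmod (f x))^2) summable_on UNIV"
    by (rule summable_on_comparison_test[OF ell2_summable[OF f]]) auto
  have "infsum (\<lambda>x. (cmod (f x))^2) UNIV
      = infsum (\<lambda>x. (if x \<in> F then (cmod (f x))^2 else 0) + (if x \<in> F then 0 else (cmod (f x))^2)) UNIV"
    by (rule infsum_cong) auto
  also have "\<dots> = infsum (\<lambda>x. if x \<in> F then (cmod (f x))^2 else 0) UNIV
       + infsum (\<lambda>x. if x \<in> F then 0 else (cmod (f x))^2) UNIV"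
    by (rule infsum_add[OF s1 s2])
  also have "infsum (\<lambda>x. if x \<in> F then (cmod (f x))^2 else 0) UNIV = sum (\<lambda>x. (cmod (f x))^2) F"
    by (subst infsum_finite_support[OF F]) auto
  finally show ?thesis by simp
qed

lemma infsum_tail_tendsto_0: assumes f: "f \<in> ell2 A"
  shows "((\<lambda>F. infsum (\<lambda>x. if x \<in> F then 0 else (cmod (f x))^2) UNIV) \<longlongrightarrow> 0) (finite_subsets_at_top UNIV)"
proof -
  have "((\<lambda>F. sum (\<lambda>x. (cmod (f x))^2) F) \<longlongrightarrow> infsum (\<lambda>x. (cmod (f x))^2) UNIV) (finite_subsets_at_top UNIV)"
    by (rule infsum_tendsto[OF ell2_summable[OF f]])
  hence "((\<lambda>F. infsum (\<lambda>x. (cmod (f x))^2) UNIV - sum (\<lambda>x. (cmod (f x))^2) F) \<longlongrightarrow>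
      infsum (\<lambda>x. (cmod (f x))^2) UNIV - infsum (\<lambda>x. (cmod (f x))^2) UNIV) (finite_subsets_at_top UNIV)"
    by (intro tendsto_diff tendsto_const)
  hence "((\<lambda>F. infsum (\<lambda>x. (cmod (f x))^2) UNIV - sum (\<lambda>x. (cmod (f x))^2) F) \<longlongrightarrow> 0) (finite_subsets_at_top UNIV)"
    by simp
  moreover have "eventually (\<lambda>F. infsum (\<lambda>x. (cmod (f x))^2) UNIV - sum (\<lambda>x. (cmod (f x))^2) F
     = infsum (\<lambda>x. if x \<in> F then 0 else (cmod (f x))^2) UNIV) (finite_subsets_at_top UNIV)"
    by (rule eventually_finite_subsets_at_top_weakI) (simp add: infsum_tail_eq[OF f])
  ultimately show ?thesis by (rule Lim_transform_eventually)
qed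

section \<open>Bounded operators\<close>

lemma bopD_ell2: "bop A B T \<Longrightarrow> f \<in> ell2 A \<Longrightarrow> T f \<in> ell2 B" by (simp add: bop_def)

lemma bopD_add: "bop A B T \<Longrightarrow> f \<in> ell2 A \<Longrightarrow> g \<in> ell2 A \<Longrightarrow> T (\<lambda>x. f x + g x) = (\<lambda>y. T f y + T g y)"
  by (simp add: bop_def)

lemma bopD_scale: "bop A B T \<Longrightarrow> f \<in> ell2 A \<Longrightarrow> T (\<lambda>x. c * f x) = (\<lambda>y. c * T f y)"
  by (simp add: bop_def)

lemma bopD_outside: "bop A B T \<Longrightarrow> f \<notin> ell2 A \<Longrightarrow> T f = (\<lambda>_. 0)"
  by (simp add: bop_def)

lemma bop_bound: assumes "bop A B T" obtains C where "C \<ge> 0" "\<And>f. f \<in> ell2 A \<Longrightarrow> norm2 (T f) \<le> C * norm2 f"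
proof -
  obtain C where C: "\<forall>f \<in> ell2 A. norm2 (T f) \<le> C * norm2 f" using assms by (auto simp: bop_def)
  show ?thesis
  proof (rule that[of "max C 0"])
    show "\<And>f. f \<in> ell2 A \<Longrightarrow> norm2 (T f) \<le> max C 0 * norm2 f"
      using C by (meson max.cobounded1 mult_right_mono norm2_nonneg order_trans)
  qed simp
qed

lemma bop_zero: "bop A B T \<Longrightarrow> T (\<lambda>_. 0) = (\<lambda>_. 0)"
  using bopD_scale[of A B T "\<lambda>_. 0" 0] by simp

lemma bop_ell2: "bop A B T \<Longrightarrow> T f \<in> ell2 B"
  by (cases "f \<in> ell2 A") (auto simp: bopD_ell2 bopD_outside)

lemma bop_diff: "bop A B T \<Longrightarrow> f \<in> ell2 A \<Longrightarrow> g \<in> ell2 A \<Longrightarrow> T (\<lambda>x. f x - g x) = (\<lambda>y. T f y - T g y)"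
proof -
  assume T: "bop A B T" and f: "f \<in> ell2 A" and g: "g \<in> ell2 A"
  have "T (\<lambda>x. f x + (-1) * g x) = (\<lambda>y. T f y + T (\<lambda>x. (-1) * g x) y)"
    by (rule bopD_add[OF T f ell2_scale[OF g]])
  thus ?thesis using bopD_scale[OF T g, of "-1"] by simp
qed

lemma bop_comp: "bop A B S \<Longrightarrow> bop B C T \<Longrightarrow> bop A C (T \<circ> S)"
proof -
  assume S: "bop A B S" and T: "bop B C T"
  obtain c1 where c1: "c1 \<ge> 0" "\<And>f. f \<in> ell2 A \<Longrightarrow> norm2 (S f) \<le> c1 * norm2 f" using bop_bound[OF S] by blast
  obtain c2 where c2: "c2 \<ge> 0" "\<And>f. f \<in> ell2 B \<Longrightarrow> norm2 (T f) \<le> c2 * norm2 f" using bop_bound[OF T] by blast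
  show ?thesis unfolding bop_def
  proof (intro conjI ballI allI impI)
    fix f assume f: "f \<in> ell2 A"
    show "(T \<circ> S) f \<in> ell2 C" using f by (simp add: bopD_ell2[OF T] bopD_ell2[OF S])
    show "\<And>c. (T \<circ> S) (\<lambda>x. c * f x) = (\<lambda>y. c * (T \<circ> S) f y)"
      using f by (simp add: bopD_scale[OF S] bopD_scale[OF T] bopD_ell2[OF S])
    fix g assume g: "g \<in> ell2 A"
    show "(T \<circ> S) (\<lambda>x. f x + g x) = (\<lambda>y. (T \<circ> S) f y + (T \<circ> S) g y)"
      using f g by (simp add: bopD_add[OF S] bopD_add[OF T] bopD_ell2[OF S])
  next
    show "\<exists>K. \<forall>f\<in>ell2 A. norm2 ((T \<circ> S) f) \<le> K * norm2 f"
    proof (intro exI ballI)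
      fix f assume f: "f \<in> ell2 A"
      have "norm2 (T (S f)) \<le> c2 * norm2 (S f)" using c2 bopD_ell2[OF S f] by blast
      also have "\<dots> \<le> c2 * (c1 * norm2 f)" using c1 c2 f by (simp add: mult_left_mono)
      finally show "norm2 ((T \<circ> S) f) \<le> (c2 * c1) * norm2 f" by (simp add: mult.assoc)
    qed
  next
    fix f assume "f \<notin> ell2 A"
    thus "(T \<circ> S) f = (\<lambda>_. 0)" by (simp add: bopD_outside[OF S] bop_zero[OF T])
  qed
qed

lemma bop_idop: "bop A A (idop A)"
  unfolding bop_def idop_def
  by (auto simp: ell2_add ell2_scale intro!: exI[of _ 1])

lemma idop_comp: "bop X A T \<Longrightarrow> idop A \<circ> T = T"
  by (rule ext) (simp add: idop_def bop_ell2)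

lemma comp_idop: "bop A X T \<Longrightarrow> T \<circ> idop A = T"
  by (rule ext) (simp add: idop_def bopD_outside bop_zero)

lemma bop_ozero: "bop A B ozero"
  unfolding bop_def ozero_def by (auto intro!: exI[of _ 0])

lemma bop_oadd: "bop A B S \<Longrightarrow> bop A B T \<Longrightarrow> bop A B (oadd S T)"
proof -
  assume S: "bop A B S" and T: "bop A B T"
  obtain c1 where c1: "c1 \<ge> 0" "\<And>f. f \<in> ell2 A \<Longrightarrow> norm2 (S f) \<le> c1 * norm2 f" using bop_bound[OF S] by blast
  obtain c2 where c2: "c2 \<ge> 0" "\<And>f. f \<in> ell2 A \<Longrightarrow> norm2 (T f) \<le> c2 * norm2 f" using bop_bound[OF T] by blast
  show ?thesis unfolding bop_def oadd_def
  proof (intro conjI ballI allI impI)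
    fix f assume f: "f \<in> ell2 A"
    show "(\<lambda>x. S f x + T f x) \<in> ell2 B" using f by (simp add: ell2_add bopD_ell2[OF S] bopD_ell2[OF T])
    show "\<And>c. (\<lambda>x. S (\<lambda>x. c * f x) x + T (\<lambda>x. c * f x) x) = (\<lambda>y. c * (S f y + T f y))"
      using f by (simp add: bopD_scale[OF S] bopD_scale[OF T] distrib_left)
    fix g assume g: "g \<in> ell2 A"
    show "(\<lambda>x. S (\<lambda>x. f x + g x) x + T (\<lambda>x. f x + g x) x) = (\<lambda>y. S f y + T f y + (S g y + T g y))"
      using f g by (simp add: bopD_add[OF S] bopD_add[OF T] algebra_simps)
  next
    show "\<exists>K. \<forall>f\<in>ell2 A. norm2 (\<lambda>x. S f x + T f x) \<le> K * norm2 f"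
    proof (intro exI ballI)
      fix f assume f: "f \<in> ell2 A"
      have "norm2 (\<lambda>x. S f x + T f x) \<le> 2 * (norm2 (S f) + norm2 (T f))"
        by (rule norm2_add_le[OF bopD_ell2[OF S f] bopD_ell2[OF T f]])
      also have "\<dots> \<le> 2 * (c1 * norm2 f + c2 * norm2 f)" using c1 c2 f by (intro mult_left_mono add_mono) auto
      finally show "norm2 (\<lambda>x. S f x + T f x) \<le> (2 * (c1 + c2)) * norm2 f" by (simp add: algebra_simps)
    qed
  next
    fix f assume "f \<notin> ell2 A"
    thus "(\<lambda>x. S f x + T f x) = (\<lambda>_. 0)" by (simp add: bopD_outside[OF S] bopD_outside[OF T])
  qed
qed

lemma bop_oscale: "bop A B T \<Longrightarrow> bop A B (oscale c T)"
proof -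
  assume T: "bop A B T"
  obtain c2 where c2: "c2 \<ge> 0" "\<And>f. f \<in> ell2 A \<Longrightarrow> norm2 (T f) \<le> c2 * norm2 f" using bop_bound[OF T] by blast
  show ?thesis unfolding bop_def oscale_def
  proof (intro conjI ballI allI impI)
    fix f assume f: "f \<in> ell2 A"
    show "(\<lambda>x. c * T f x) \<in> ell2 B" using f by (simp add: ell2_scale bopD_ell2[OF T])
    show "\<And>d. (\<lambda>x. c * T (\<lambda>x. d * f x) x) = (\<lambda>y. d * (c * T f y))"
      using f by (simp add: bopD_scale[OF T] algebra_simps)
    fix g assume g: "g \<in> ell2 A"
    show "(\<lambda>x. c * T (\<lambda>x. f x + g x) x) = (\<lambda>y. c * T f y + c * T g y)"
      using f g by (simp add: bopD_add[OF T] algebra_simps)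
  next
    show "\<exists>K. \<forall>f\<in>ell2 A. norm2 (\<lambda>x. c * T f x) \<le> K * norm2 f"
    proof (intro exI ballI)
      fix f assume f: "f \<in> ell2 A"
      have "norm2 (\<lambda>x. c * T f x) = cmod c * norm2 (T f)" by (rule norm2_scale)
      also have "\<dots> \<le> cmod c * (c2 * norm2 f)" using c2 f by (intro mult_left_mono) auto
      finally show "norm2 (\<lambda>x. c * T f x) \<le> (cmod c * c2) * norm2 f" by (simp add: algebra_simps)
    qed
  next
    fix f assume "f \<notin> ell2 A"
    thus "(\<lambda>x. c * T f x) = (\<lambda>_. 0)" by (simp add: bopD_outside[OF T])
  qed
qed

lemma comp_oadd_right: "bop A B R \<Longrightarrow> bop C A S \<Longrightarrow> bop C A T \<Longrightarrow> R \<circ> oadd S T = oadd (R \<circ> S) (R \<circ> T)"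
  by (rule ext) (simp add: oadd_def bopD_add bop_ell2)

lemma comp_oscale_right: "bop A B R \<Longrightarrow> bop C A S \<Longrightarrow> R \<circ> oscale c S = oscale c (R \<circ> S)"
  by (rule ext) (simp add: oscale_def bopD_scale bop_ell2)

lemma oadd_comp: "oadd S T \<circ> R = oadd (S \<circ> R) (T \<circ> R)"
  by (rule ext) (simp add: oadd_def)

lemma oscale_comp: "oscale c S \<circ> R = oscale c (S \<circ> R)"
  by (rule ext) (simp add: oscale_def)

lemma ozero_comp: "ozero \<circ> R = ozero"
  by (rule ext) (simp add: ozero_def)

lemma comp_ozero: "bop A B R \<Longrightarrow> R \<circ> ozero = ozero"
  by (rule ext) (simp add: ozero_def bop_zero[unfolded ozero_def])

lemma Bop_iff: "T \<in> Bop A \<longleftrightarrow> bop A A T" by (simp add: Bop_def)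

lemma bop_trunc_expand: assumes T: "bop A B T" shows "finite F \<Longrightarrow> F \<subseteq> A \<Longrightarrow>
    T (trunc F c) = (\<lambda>z. \<Sum>x\<in>F. c x * T (delta x) z)"
proof (induction F rule: finite_induct)
  case empty
  then show ?case using bop_zero[OF T] by (simp add: trunc_def)
next
  case (insert a F)
  have e: "trunc (insert a F) c = (\<lambda>y. c a * delta a y + trunc F c y)"
    using insert by (auto simp: trunc_def delta_def)
  have "T (trunc (insert a F) c) = (\<lambda>z. T (\<lambda>y. c a * delta a y) z + T (trunc F c) z)"
    unfolding e using insert by (intro bopD_add[OF T] ell2_scale delta_ell2 trunc_ell2) auto
  also have "\<dots> = (\<lambda>z. c a * T (delta a) z + T (trunc F c) z)"
    using insert by (simp add: bopD_scale[OF T] delta_ell2)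
  finally show ?case using insert by simp
qed

definition adjop :: "'a set \<Rightarrow> 'b set \<Rightarrow> ('a,'b) op \<Rightarrow> ('b,'a) op" where
  "adjop A B T = (\<lambda>\<xi>. if \<xi> \<in> ell2 B then (\<lambda>x. if x \<in> A then ip (T (delta x)) \<xi> else 0) else (\<lambda>_. 0))"

lemma adjop_partial_sum_le:
  assumes T: "bop A B T" and C: "C \<ge> 0" "\<And>f. f \<in> ell2 A \<Longrightarrow> norm2 (T f) \<le> C * norm2 f"
    and xi: "\<xi> \<in> ell2 B" and F: "finite F" "F \<subseteq> A"
  shows "(\<Sum>x\<in>F. (cmod (adjop A B T \<xi> x))^2) \<le> (C * norm2 \<xi>)^2"
proof -
  define c where "c = adjop A B T \<xi>"
  define S where "S = (\<Sum>x\<in>F. (cmod (c x))^2)"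
  have S0: "S \<ge> 0" by (simp add: S_def sum_nonneg)
  have "ip \<xi> (T (trunc F c)) = (\<Sum>x\<in>F. c x * ip \<xi> (T (delta x)))"
    unfolding bop_trunc_expand[OF T F]
    by (rule ip_sum_right[OF xi F(1)]) (use F in \<open>auto intro: bopD_ell2[OF T] delta_ell2\<close>)
  also have "\<dots> = (\<Sum>x\<in>F. c x * cnj (c x))"
    using F xi by (intro sum.cong) (auto simp: c_def adjop_def ip_cnj[of \<xi>])
  also have "\<dots> = complex_of_real S"
    by (simp only: S_def of_real_sum complex_norm_square)
  finally have e: "ip \<xi> (T (trunc F c)) = complex_of_real S" .
  have n: "norm2 (trunc F c) = sqrt S"
    using norm2_trunc[OF F(1), of c] by (simp add: S_def real_sqrt_unique)
  have "S = cmod (ip \<xi> (T (trunc F c)))" using e S0 by simp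
  also have "\<dots> \<le> norm2 \<xi> * norm2 (T (trunc F c))"
    by (rule cmod_ip_le_norm2[OF xi bopD_ell2[OF T trunc_ell2[OF F]]])
  also have "\<dots> \<le> norm2 \<xi> * (C * sqrt S)"
    unfolding n[symmetric] by (intro mult_left_mono C(2) trunc_ell2[OF F]) simp
  finally have Sle: "S \<le> C * norm2 \<xi> * sqrt S" by (simp only: ac_simps)
  have "S \<le> (C * norm2 \<xi>)^2"
  proof (cases "S = 0")
    case True then show ?thesis by simp
  next
    case False
    hence "sqrt S > 0" using S0 by simp
    moreover have "sqrt S * sqrt S \<le> C * norm2 \<xi> * sqrt S" using Sle S0 by simp
    ultimately have "sqrt S \<le> C * norm2 \<xi>" by (meson mult_right_le_imp_le)
    hence "(sqrt S)^2 \<le> (C * norm2 \<xi>)^2" by (rule power_mono) (simp add: S0)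
    thus ?thesis using S0 by simp
  qed
  thus ?thesis by (simp add: S_def c_def)
qed

lemma adjop_ell2:
  assumes T: "bop A B T" and C: "C \<ge> 0" "\<And>f. f \<in> ell2 A \<Longrightarrow> norm2 (T f) \<le> C * norm2 f"
    and xi: "\<xi> \<in> ell2 B"
  shows "adjop A B T \<xi> \<in> ell2 A" "norm2 (adjop A B T \<xi>) \<le> C * norm2 \<xi>"
proof -
  define g where "g x = (cmod (adjop A B T \<xi> x))^2" for x
  have g0: "\<And>x. x \<notin> A \<Longrightarrow> g x = 0" by (simp add: g_def adjop_def)
  have bnd: "sum g F \<le> (C * norm2 \<xi>)^2" if F: "finite F" for F
  proof -
    have "sum g F = sum g (F \<inter> A)"
      using F g0 by (intro sum.mono_neutral_right) auto
    also have "\<dots> \<le> (C * norm2 \<xi>)^2"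
      unfolding g_def by (rule adjop_partial_sum_le[OF T C xi]) (use F in auto)
    finally show ?thesis .
  qed
  have gs: "g summable_on UNIV"
    by (rule nonneg_bdd_above_summable_on) (use bnd in \<open>auto simp: g_def bdd_above_def\<close>)
  show ell: "adjop A B T \<xi> \<in> ell2 A"
    by (rule ell2I) (use gs in \<open>auto simp: adjop_def g_def[abs_def]\<close>)
  have "infsum g UNIV \<le> (C * norm2 \<xi>)^2"
    by (rule infsum_le_finite_sums[OF gs]) (rule bnd)
  hence "(norm2 (adjop A B T \<xi>))^2 \<le> (C * norm2 \<xi>)^2"
    using norm2_sq_eq[OF ell] by (simp add: g_def[abs_def])
  thus "norm2 (adjop A B T \<xi>) \<le> C * norm2 \<xi>"
    by (rule power2_le_imp_le) (simp add: C)
qed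

lemma sum_adjop_eq_ip_trunc:
  assumes T: "bop A B T" and xi: "\<xi> \<in> ell2 B" and F: "finite F"
  shows "(\<Sum>x\<in>F. cnj (adjop A B T \<xi> x) * \<eta> x) = ip \<xi> (T (trunc (F \<inter> A) \<eta>))"
proof -
  have "(\<Sum>x\<in>F. cnj (adjop A B T \<xi> x) * \<eta> x) = (\<Sum>x\<in>F \<inter> A. cnj (adjop A B T \<xi> x) * \<eta> x)"
    using F by (intro sum.mono_neutral_right) (auto simp: adjop_def)
  also have "\<dots> = (\<Sum>x\<in>F \<inter> A. \<eta> x * ip \<xi> (T (delta x)))"
    using xi by (intro sum.cong) (auto simp: adjop_def ip_cnj[of \<xi>])
  also have "\<dots> = ip \<xi> (\<lambda>z. \<Sum>x\<in>F \<inter> A. \<eta> x * T (delta x) z)"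
    by (rule ip_sum_right[OF xi, symmetric]) (use F in \<open>auto intro: bopD_ell2[OF T] delta_ell2\<close>)
  also have "\<dots> = ip \<xi> (T (trunc (F \<inter> A) \<eta>))"
    using F by (simp add: bop_trunc_expand[OF T])
  finally show ?thesis .
qed

lemma ip_trunc_tail_le:
  assumes T: "bop A B T" and C: "\<And>f. f \<in> ell2 A \<Longrightarrow> norm2 (T f) \<le> C * norm2 f"
    and xi: "\<xi> \<in> ell2 B" and eta: "\<eta> \<in> ell2 A" and F: "finite F"
  shows "cmod (ip \<xi> (T (trunc (F \<inter> A) \<eta>)) - ip \<xi> (T \<eta>))
           \<le> norm2 \<xi> * C * sqrt (infsum (\<lambda>x. if x \<in> F then 0 else (cmod (\<eta> x))^2) UNIV)"
proof -
  let ?r = "\<lambda>x. \<eta> x - trunc (F \<inter> A) \<eta> x"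
  have tr: "trunc (F \<inter> A) \<eta> \<in> ell2 A" by (rule trunc_ell2) (use F in auto)
  have r: "?r \<in> ell2 A" by (rule ell2_diff[OF eta tr])
  have "ip \<xi> (T (trunc (F \<inter> A) \<eta>)) - ip \<xi> (T \<eta>) = - ip \<xi> (\<lambda>y. T \<eta> y - T (trunc (F \<inter> A) \<eta>) y)"
    by (subst ip_diff_right[OF xi bopD_ell2[OF T eta] bopD_ell2[OF T tr]]) simp
  also have "(\<lambda>y. T \<eta> y - T (trunc (F \<inter> A) \<eta>) y) = T ?r"
    by (rule bop_diff[OF T eta tr, symmetric])
  finally have "cmod (ip \<xi> (T (trunc (F \<inter> A) \<eta>)) - ip \<xi> (T \<eta>)) = cmod (ip \<xi> (T ?r))" by simp
  also have "\<dots> \<le> norm2 \<xi> * norm2 (T ?r)"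
    by (rule cmod_ip_le_norm2[OF xi bopD_ell2[OF T r]])
  also have "\<dots> \<le> norm2 \<xi> * (C * norm2 ?r)"
    by (intro mult_left_mono C r) simp
  also have "?r = (\<lambda>x. if x \<in> F then 0 else \<eta> x)"
    using eta by (auto simp: trunc_def ell2_vanishes)
  also have "norm2 \<dots> = sqrt (infsum (\<lambda>x. if x \<in> F then 0 else (cmod (\<eta> x))^2) UNIV)"
    unfolding norm2_def by (intro arg_cong[where f=sqrt] infsum_cong) simp
  finally show ?thesis by (simp add: mult.assoc)
qed

lemma ip_adjop:
  assumes T: "bop A B T" and xi: "\<xi> \<in> ell2 B" and eta: "\<eta> \<in> ell2 A"
  shows "ip \<xi> (T \<eta>) = ip (adjop A B T \<xi>) \<eta>"
proof -
  obtain C where C: "C \<ge> 0" "\<And>f. f \<in> ell2 A \<Longrightarrow> norm2 (T f) \<le> C * norm2 f" using bop_bound[OF T] by blast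
  define g where "g x = cnj (adjop A B T \<xi> x) * \<eta> x" for x
  define tail where "tail F = infsum (\<lambda>x. if x \<in> F then 0 else (cmod (\<eta> x))^2) UNIV" for F
  have "((\<lambda>F. norm2 \<xi> * C * sqrt (tail F)) \<longlongrightarrow> norm2 \<xi> * C * sqrt 0) (finite_subsets_at_top UNIV)"
    unfolding tail_def by (intro tendsto_mult_left tendsto_real_sqrt infsum_tail_tendsto_0[OF eta])
  then have lim0: "((\<lambda>F. norm2 \<xi> * C * sqrt (tail F)) \<longlongrightarrow> 0) (finite_subsets_at_top UNIV)" by simp
  have ev: "eventually (\<lambda>F. norm (sum g F - ip \<xi> (T \<eta>)) \<le> norm2 \<xi> * C * sqrt (tail F)) (finite_subsets_at_top UNIV)"
  proof (rule eventually_finite_subsets_at_top_weakI)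
    fix F :: "'a set" assume "finite F"
    show "norm (sum g F - ip \<xi> (T \<eta>)) \<le> norm2 \<xi> * C * sqrt (tail F)"
      unfolding g_def tail_def sum_adjop_eq_ip_trunc[OF T xi \<open>finite F\<close>]
      by (rule ip_trunc_tail_le[OF T C(2) xi eta \<open>finite F\<close>])
  qed
  have "((\<lambda>F. sum g F - ip \<xi> (T \<eta>)) \<longlongrightarrow> 0) (finite_subsets_at_top UNIV)"
    by (rule Lim_null_comparison[OF ev lim0])
  then have "(g has_sum ip \<xi> (T \<eta>)) UNIV"
    unfolding has_sum_def by (simp add: LIM_zero_iff)
  then have "infsum g UNIV = ip \<xi> (T \<eta>)" by (rule infsumI)
  then show ?thesis by (simp add: ip_def g_def[abs_def])
qed

lemma bop_adjop: assumes T: "bop A B T" shows "bop B A (adjop A B T)"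
proof -
  obtain C where C: "C \<ge> 0" "\<And>f. f \<in> ell2 A \<Longrightarrow> norm2 (T f) \<le> C * norm2 f" using bop_bound[OF T] by blast
  show ?thesis unfolding bop_def
  proof (intro conjI ballI allI impI)
    fix f assume f: "f \<in> ell2 B"
    show "adjop A B T f \<in> ell2 A" by (rule adjop_ell2(1)[OF T C f])
    show "\<And>c. adjop A B T (\<lambda>x. c * f x) = (\<lambda>y. c * adjop A B T f y)"
      using f by (auto simp: adjop_def ell2_scale ip_scale_right)
    fix g assume g: "g \<in> ell2 B"
    show "adjop A B T (\<lambda>x. f x + g x) = (\<lambda>y. adjop A B T f y + adjop A B T g y)"
      using f g by (auto simp: adjop_def ell2_add ip_add_right[OF bop_ell2[OF T]])
  next
    show "\<exists>K. \<forall>f\<in>ell2 B. norm2 (adjop A B T f) \<le> K * norm2 f"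
      using adjop_ell2(2)[OF T C] by blast
  next
    fix f assume "f \<notin> ell2 B"
    thus "adjop A B T f = (\<lambda>_. 0)" by (simp add: adjop_def)
  qed
qed

section \<open>The w*-topology\<close>

lemma normal_pairD: "normal_pair A \<xi> \<eta> \<Longrightarrow> \<xi> k \<in> ell2 A" "normal_pair A \<xi> \<eta> \<Longrightarrow> \<eta> k \<in> ell2 A"
  "normal_pair A \<xi> \<eta> \<Longrightarrow> summable (\<lambda>k. (norm2 (\<xi> k))^2)" "normal_pair A \<xi> \<eta> \<Longrightarrow> summable (\<lambda>k. (norm2 (\<eta> k))^2)"
  by (auto simp: normal_pair_def)

lemma normal_pair_zero: "normal_pair A (\<lambda>_ _. 0) (\<lambda>_ _. 0)"
  by (simp add: normal_pair_def)

lemma cmod_ip_term_le: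
  assumes np: "normal_pair A \<xi> \<eta>" and T: "bop A A T" and C: "\<And>f. f \<in> ell2 A \<Longrightarrow> norm2 (T f) \<le> C * norm2 f"
  shows "cmod (ip (\<xi> k) (T (\<eta> k))) \<le> (1/2) * ((norm2 (\<xi> k))^2 + C^2 * (norm2 (\<eta> k))^2)"
proof -
  have "cmod (ip (\<xi> k) (T (\<eta> k))) \<le> (1/2) * ((norm2 (\<xi> k))^2 + (norm2 (T (\<eta> k)))^2)"
    by (rule cmod_ip_le_half_norm2[OF normal_pairD(1)[OF np] bopD_ell2[OF T normal_pairD(2)[OF np]]])
  also have "(norm2 (T (\<eta> k)))^2 \<le> C^2 * (norm2 (\<eta> k))^2"
  proof -
    have "(norm2 (T (\<eta> k)))^2 \<le> (C * norm2 (\<eta> k))^2"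
      by (rule power_mono[OF C[OF normal_pairD(2)[OF np]]]) simp
    thus ?thesis by (simp add: power_mult_distrib)
  qed
  finally show ?thesis by simp
qed

lemma nfun_summable:
  assumes np: "normal_pair A \<xi> \<eta>" and T: "bop A A T"
  shows "summable (\<lambda>k. cmod (ip (\<xi> k) (T (\<eta> k))))" "summable (\<lambda>k. ip (\<xi> k) (T (\<eta> k)))"
proof -
  obtain C where C: "C \<ge> 0" "\<And>f. f \<in> ell2 A \<Longrightarrow> norm2 (T f) \<le> C * norm2 f" using bop_bound[OF T] by blast
  have s: "summable (\<lambda>k. (1/2) * ((norm2 (\<xi> k))^2 + C^2 * (norm2 (\<eta> k))^2))"
    using normal_pairD(3,4)[OF np] by (intro summable_mult summable_add) auto
  show "summable (\<lambda>k. cmod (ip (\<xi> k) (T (\<eta> k))))"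
    by (rule summable_comparison_test[OF _ s])
      (intro exI[of _ 0] allI impI, simp only: real_norm_def abs_norm_cancel, rule cmod_ip_term_le[OF np T C(2)])
  thus "summable (\<lambda>k. ip (\<xi> k) (T (\<eta> k)))" by (rule summable_norm_cancel)
qed

lemma nfun_oadd: assumes np: "normal_pair A \<xi> \<eta>" and S: "bop A A S" and T: "bop A A T"
  shows "nfun \<xi> \<eta> (oadd S T) = nfun \<xi> \<eta> S + nfun \<xi> \<eta> T"
proof -
  have "ip (\<xi> k) (oadd S T (\<eta> k)) = ip (\<xi> k) (S (\<eta> k)) + ip (\<xi> k) (T (\<eta> k))" for k
    unfolding oadd_def
    by (rule ip_add_right[OF normal_pairD(1)[OF np] bopD_ell2[OF S normal_pairD(2)[OF np]]
          bopD_ell2[OF T normal_pairD(2)[OF np]]])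
  then show ?thesis
    unfolding nfun_def by (simp add: suminf_add[OF nfun_summable(2)[OF np S] nfun_summable(2)[OF np T]])
qed

lemma nfun_oscale: "normal_pair A \<xi> \<eta> \<Longrightarrow> bop A A T \<Longrightarrow> nfun \<xi> \<eta> (oscale c T) = c * nfun \<xi> \<eta> T"
  unfolding nfun_def oscale_def ip_scale_right
  by (rule suminf_mult[OF nfun_summable(2)])

lemma normal_pair_map_right: "normal_pair A \<xi> \<eta> \<Longrightarrow> bop A A B \<Longrightarrow> normal_pair A \<xi> (\<lambda>k. B (\<eta> k))"
proof -
  assume np: "normal_pair A \<xi> \<eta>" and B: "bop A A B"
  obtain C where C: "C \<ge> 0" "\<And>f. f \<in> ell2 A \<Longrightarrow> norm2 (B f) \<le> C * norm2 f" using bop_bound[OF B] by blast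
  have "summable (\<lambda>k. C^2 * (norm2 (\<eta> k))^2)" using normal_pairD(4)[OF np] by (rule summable_mult)
  hence "summable (\<lambda>k. (norm2 (B (\<eta> k)))^2)"
  proof (rule summable_comparison_test[rotated], intro exI allI impI)
    fix k
    have "(norm2 (B (\<eta> k)))^2 \<le> (C * norm2 (\<eta> k))^2"
      by (rule power_mono[OF C(2)[OF normal_pairD(2)[OF np]]]) simp
    thus "norm ((norm2 (B (\<eta> k)))^2) \<le> C^2 * (norm2 (\<eta> k))^2" by (simp add: power_mult_distrib)
  qed
  thus ?thesis using np B by (auto simp: normal_pair_def bopD_ell2)
qed

lemma normal_pair_map_left: "normal_pair A \<xi> \<eta> \<Longrightarrow> bop A A B \<Longrightarrow> normal_pair A (\<lambda>k. B (\<xi> k)) \<eta>"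
proof -
  assume np: "normal_pair A \<xi> \<eta>" and B: "bop A A B"
  have np': "normal_pair A \<eta> \<xi>" using np by (auto simp: normal_pair_def)
  show ?thesis using normal_pair_map_right[OF np' B] by (auto simp: normal_pair_def)
qed

lemma nfun_comp_right: "nfun \<xi> \<eta> (T \<circ> B) = nfun \<xi> (\<lambda>k. B (\<eta> k)) T"
  by (simp add: nfun_def)

lemma nfun_comp_left: assumes np: "normal_pair A \<xi> \<eta>" and B: "bop A A B" and T: "bop A A T"
  shows "nfun \<xi> \<eta> (B \<circ> T) = nfun (\<lambda>k. adjop A A B (\<xi> k)) \<eta> T"
  unfolding nfun_def o_def
  by (rule suminf_cong, rule ip_adjop[OF B normal_pairD(1)[OF np] bopD_ell2[OF T normal_pairD(2)[OF np]]])

lemma topspace_wstar: "topspace (wstar A) = Bop A"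
  unfolding wstar_def topology_generated_by_topspace
proof
  show "\<Union> {{T \<in> Bop A. nfun \<xi> \<eta> T \<in> U} |\<xi> \<eta> U. open U \<and> normal_pair A \<xi> \<eta>} \<subseteq> Bop A" by auto
  show "Bop A \<subseteq> \<Union> {{T \<in> Bop A. nfun \<xi> \<eta> T \<in> U} |\<xi> \<eta> U. open U \<and> normal_pair A \<xi> \<eta>}"
    using normal_pair_zero[of A] by blast
qed

lemma continuous_map_wstar_affine:
  assumes into: "\<And>T. T \<in> Bop A \<Longrightarrow> \<Phi> T \<in> Bop A"
    and aff: "\<And>\<xi> \<eta>. normal_pair A \<xi> \<eta> \<Longrightarrow> \<exists>\<xi>' \<eta>' c a. normal_pair A \<xi>' \<eta>' \<and>
          (\<forall>T \<in> Bop A. nfun \<xi> \<eta> (\<Phi> T) = c + a * nfun \<xi>' \<eta>' T)"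
  shows "continuous_map (wstar A) (wstar A) \<Phi>"
  unfolding continuous_map_def topspace_wstar
proof (intro conjI allI impI)
  show "\<Phi> \<in> Bop A \<rightarrow> Bop A" using into by auto
  fix U assume "openin (wstar A) U"
  hence g: "generate_topology_on {{T \<in> Bop A. nfun \<xi> \<eta> T \<in> U} |\<xi> \<eta> U. open U \<and> normal_pair A \<xi> \<eta>} U"
    unfolding wstar_def by (rule openin_topology_generated_by)
  show "openin (wstar A) {x \<in> Bop A. \<Phi> x \<in> U}"
    using g
  proof (induction rule: generate_topology_on.induct)
    case Empty
    then show ?case by simp
  next
    case (Int a b)
    have "{x \<in> Bop A. \<Phi> x \<in> a \<inter> b} = {x \<in> Bop A. \<Phi> x \<in> a} \<inter> {x \<in> Bop A. \<Phi> x \<in> b}" by auto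
    then show ?case using Int by auto
  next
    case (UN K)
    have "{x \<in> Bop A. \<Phi> x \<in> \<Union>K} = \<Union>((\<lambda>k. {x \<in> Bop A. \<Phi> x \<in> k}) ` K)" by auto
    then show ?case using UN by auto
  next
    case (Basis s)
    then obtain \<xi> \<eta> V where s: "s = {T \<in> Bop A. nfun \<xi> \<eta> T \<in> V}" and V: "open V" and np: "normal_pair A \<xi> \<eta>"
      by blast
    obtain \<xi>' \<eta>' c a where np': "normal_pair A \<xi>' \<eta>'" and e: "\<forall>T \<in> Bop A. nfun \<xi> \<eta> (\<Phi> T) = c + a * nfun \<xi>' \<eta>' T"
      using aff[OF np] by blast
    have "{x \<in> Bop A. \<Phi> x \<in> s} = {T \<in> Bop A. c + a * nfun \<xi>' \<eta>' T \<in> V}"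
      using s e into by auto
    also have "\<dots> = {T \<in> Bop A. nfun \<xi>' \<eta>' T \<in> (\<lambda>z. c + a * z) -` V}" by auto
    finally have eq: "{x \<in> Bop A. \<Phi> x \<in> s} = {T \<in> Bop A. nfun \<xi>' \<eta>' T \<in> (\<lambda>z. c + a * z) -` V}" .
    have op: "open ((\<lambda>z. c + a * z) -` V)"
      by (rule open_vimage[OF V]) (intro continuous_intros)
    show ?case
      unfolding eq wstar_def by (rule topology_generated_by_Basis) (use np' op in blast)
  qed
qed

lemma in_wstar_closure_of_seq:
  assumes T: "T \<in> Bop A" and X: "\<And>m. X m \<in> S" "\<And>m. X m \<in> Bop A"
    and lim: "\<And>\<xi> \<eta>. normal_pair A \<xi> \<eta> \<Longrightarrow> (\<lambda>m. nfun \<xi> \<eta> (X m)) \<longlonglongrightarrow> nfun \<xi> \<eta> T"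
  shows "T \<in> wstar A closure_of S"
  unfolding in_closure_of topspace_wstar
proof (intro conjI allI impI T)
  fix W assume "T \<in> W \<and> openin (wstar A) W"
  hence TO: "T \<in> W" and g: "generate_topology_on {{T \<in> Bop A. nfun \<xi> \<eta> T \<in> U} |\<xi> \<eta> U. open U \<and> normal_pair A \<xi> \<eta>} W"
    unfolding wstar_def using openin_topology_generated_by by blast+
  have "T \<in> W \<longrightarrow> eventually (\<lambda>m. X m \<in> W) sequentially"
    using g
  proof (induction rule: generate_topology_on.induct)
    case Empty
    then show ?case by simp
  next
    case (Int a b)
    then show ?case by (auto intro: eventually_conj)
  next
    case (UN K)
    show ?case
    proof
      assume "T \<in> \<Union>K"
      then obtain k where k: "k \<in> K" "T \<in> k" by blast
      hence "eventually (\<lambda>m. X m \<in> k) sequentially" using UN by blast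
      thus "eventually (\<lambda>m. X m \<in> \<Union>K) sequentially" by (rule eventually_mono) (use k in blast)
    qed
  next
    case (Basis s)
    then obtain \<xi> \<eta> V where s: "s = {T \<in> Bop A. nfun \<xi> \<eta> T \<in> V}" and V: "open V" and np: "normal_pair A \<xi> \<eta>"
      by blast
    show ?case
    proof
      assume "T \<in> s"
      hence "nfun \<xi> \<eta> T \<in> V" using s by simp
      hence "eventually (\<lambda>m. nfun \<xi> \<eta> (X m) \<in> V) sequentially"
        using topological_tendstoD[OF lim[OF np] V] by blast
      thus "eventually (\<lambda>m. X m \<in> s) sequentially"
        by (rule eventually_mono) (simp add: s X(2))
    qed
  qed
  hence "eventually (\<lambda>m. X m \<in> W) sequentially" using TO by blast
  then obtain N where "\<And>m. m \<ge> N \<Longrightarrow> X m \<in> W" by (auto simp: eventually_sequentially)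
  thus "\<exists>y. y \<in> S \<and> y \<in> W" using X(1) by blast
qed

lemma continuous_map_oadd_left:
  assumes "a \<in> Bop A"
  shows "continuous_map (wstar A) (wstar A) (\<lambda>T. oadd a T)"
proof (rule continuous_map_wstar_affine)
  fix \<xi> \<eta> assume "normal_pair A \<xi> \<eta>"
  then show "\<exists>\<xi>' \<eta>' c s. normal_pair A \<xi>' \<eta>' \<and> (\<forall>T\<in>Bop A. nfun \<xi> \<eta> (oadd a T) = c + s * nfun \<xi>' \<eta>' T)"
    using assms by (intro exI[of _ \<xi>] exI[of _ \<eta>] exI[of _ "nfun \<xi> \<eta> a"] exI[of _ 1]) (simp add: Bop_iff nfun_oadd)
qed (use assms in \<open>simp add: Bop_iff bop_oadd\<close>)

lemma continuous_map_oadd_right: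
  assumes "b \<in> Bop A"
  shows "continuous_map (wstar A) (wstar A) (\<lambda>T. oadd T b)"
proof (rule continuous_map_wstar_affine)
  fix \<xi> \<eta> assume "normal_pair A \<xi> \<eta>"
  then show "\<exists>\<xi>' \<eta>' c s. normal_pair A \<xi>' \<eta>' \<and> (\<forall>T\<in>Bop A. nfun \<xi> \<eta> (oadd T b) = c + s * nfun \<xi>' \<eta>' T)"
    using assms by (intro exI[of _ \<xi>] exI[of _ \<eta>] exI[of _ "nfun \<xi> \<eta> b"] exI[of _ 1]) (simp add: Bop_iff nfun_oadd)
qed (use assms in \<open>simp add: Bop_iff bop_oadd\<close>)

lemma continuous_map_oscale:
  shows "continuous_map (wstar A) (wstar A) (\<lambda>T. oscale c T)"
proof (rule continuous_map_wstar_affine)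
  fix \<xi> \<eta> assume "normal_pair A \<xi> \<eta>"
  then show "\<exists>\<xi>' \<eta>' b s. normal_pair A \<xi>' \<eta>' \<and> (\<forall>T\<in>Bop A. nfun \<xi> \<eta> (oscale c T) = b + s * nfun \<xi>' \<eta>' T)"
    by (intro exI[of _ \<xi>] exI[of _ \<eta>] exI[of _ 0] exI[of _ c]) (simp add: Bop_iff nfun_oscale)
qed (simp add: Bop_iff bop_oscale)

lemma continuous_map_comp_right:
  assumes "B \<in> Bop A"
  shows "continuous_map (wstar A) (wstar A) (\<lambda>T. T \<circ> B)"
proof (rule continuous_map_wstar_affine)
  fix \<xi> \<eta> assume "normal_pair A \<xi> \<eta>"
  then show "\<exists>\<xi>' \<eta>' c s. normal_pair A \<xi>' \<eta>' \<and> (\<forall>T\<in>Bop A. nfun \<xi> \<eta> (T \<circ> B) = c + s * nfun \<xi>' \<eta>' T)"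
    using assms by (intro exI[of _ \<xi>] exI[of _ "\<lambda>k. B (\<eta> k)"] exI[of _ 0] exI[of _ 1])
      (simp add: Bop_iff nfun_comp_right normal_pair_map_right)
qed (use assms in \<open>simp add: Bop_iff bop_comp\<close>)

lemma continuous_map_comp_left:
  assumes "B \<in> Bop A"
  shows "continuous_map (wstar A) (wstar A) (\<lambda>T. B \<circ> T)"
proof (rule continuous_map_wstar_affine)
  fix \<xi> \<eta> assume "normal_pair A \<xi> \<eta>"
  then show "\<exists>\<xi>' \<eta>' c s. normal_pair A \<xi>' \<eta>' \<and> (\<forall>T\<in>Bop A. nfun \<xi> \<eta> (B \<circ> T) = c + s * nfun \<xi>' \<eta>' T)"
    using assms by (intro exI[of _ "\<lambda>k. adjop A A B (\<xi> k)"] exI[of _ \<eta>] exI[of _ 0] exI[of _ 1])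
      (simp add: Bop_iff nfun_comp_left normal_pair_map_left bop_adjop)
qed (use assms in \<open>simp add: Bop_iff bop_comp\<close>)

lemma image_closure_of_subset_closedin:
  assumes c: "continuous_map (wstar A) (wstar A) \<Phi>" and sub: "\<Phi> ` S \<subseteq> L" and L: "closedin (wstar A) L"
  shows "\<Phi> ` (wstar A closure_of S) \<subseteq> L"
proof -
  have "\<Phi> ` (wstar A closure_of S) \<subseteq> wstar A closure_of (\<Phi> ` S)"
    by (rule continuous_map_image_closure_subset[OF c])
  also have "\<dots> \<subseteq> wstar A closure_of L" by (rule closure_of_mono[OF sub])
  also have "\<dots> = L" using L by (simp add: closure_of_closedin)
  finally show ?thesis .
qed

section \<open>Closed spans and closed algebras\<close>

definition op_subspace :: "'a set \<Rightarrow> ('a,'a) op set \<Rightarrow> bool" where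
  "op_subspace A S \<longleftrightarrow> S \<subseteq> Bop A \<and> ozero \<in> S \<and> (\<forall>a\<in>S. \<forall>b\<in>S. oadd a b \<in> S) \<and> (\<forall>c. \<forall>a\<in>S. oscale c a \<in> S)"

lemma op_subspace_closure_of:
  assumes S: "op_subspace A S"
  shows "op_subspace A (wstar A closure_of S)"
proof -
  let ?L = "wstar A closure_of S"
  have SB: "S \<subseteq> Bop A" using S by (simp add: op_subspace_def)
  have LB: "?L \<subseteq> Bop A" using closure_of_subset_topspace[of "wstar A" S] by (simp add: topspace_wstar)
  have SL: "S \<subseteq> ?L" using closure_of_subset[of S "wstar A"] SB by (simp add: topspace_wstar)
  have cl: "closedin (wstar A) ?L" by simp
  have add1: "oadd a b \<in> ?L" if a: "a \<in> S" and b: "b \<in> ?L" for a b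
  proof -
    have "(\<lambda>T. oadd a T) ` S \<subseteq> ?L" using S a SL by (auto simp: op_subspace_def)
    hence "(\<lambda>T. oadd a T) ` ?L \<subseteq> ?L"
      by (rule image_closure_of_subset_closedin[OF continuous_map_oadd_left[OF subsetD[OF SB a]] _ cl])
    thus ?thesis using b by blast
  qed
  have add2: "oadd a b \<in> ?L" if a: "a \<in> ?L" and b: "b \<in> ?L" for a b
  proof -
    have "(\<lambda>T. oadd T b) ` S \<subseteq> ?L" using add1 b by auto
    hence "(\<lambda>T. oadd T b) ` ?L \<subseteq> ?L"
      by (rule image_closure_of_subset_closedin[OF continuous_map_oadd_right[OF subsetD[OF LB b]] _ cl])
    thus ?thesis using a by blast
  qed
  have sc: "oscale c a \<in> ?L" if a: "a \<in> ?L" for a c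
  proof -
    have "(\<lambda>T. oscale c T) ` S \<subseteq> ?L" using S SL by (auto simp: op_subspace_def)
    hence "(\<lambda>T. oscale c T) ` ?L \<subseteq> ?L"
      by (rule image_closure_of_subset_closedin[OF continuous_map_oscale _ cl])
    thus ?thesis using a by blast
  qed
  have "ozero \<in> ?L" using S SL by (auto simp: op_subspace_def)
  thus ?thesis using LB add2 sc by (simp add: op_subspace_def)
qed

lemma closure_of_comp_closed:
  assumes S: "S \<subseteq> Bop A" and prod: "\<And>a b. a \<in> S \<Longrightarrow> b \<in> S \<Longrightarrow> a \<circ> b \<in> wstar A closure_of S"
    and a: "a \<in> wstar A closure_of S" and b: "b \<in> wstar A closure_of S"
  shows "a \<circ> b \<in> wstar A closure_of S"
proof -
  let ?L = "wstar A closure_of S"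
  have LB: "?L \<subseteq> Bop A" using closure_of_subset_topspace[of "wstar A" S] by (simp add: topspace_wstar)
  have cl: "closedin (wstar A) ?L" by simp
  have m1: "a \<circ> b \<in> ?L" if a: "a \<in> S" and b: "b \<in> ?L" for a b
  proof -
    have "(\<lambda>T. a \<circ> T) ` S \<subseteq> ?L" using prod a by auto
    hence "(\<lambda>T. a \<circ> T) ` ?L \<subseteq> ?L"
      by (rule image_closure_of_subset_closedin[OF continuous_map_comp_left[OF subsetD[OF S a]] _ cl])
    thus ?thesis using b by blast
  qed
  have "(\<lambda>T. T \<circ> b) ` S \<subseteq> ?L" using m1 b by auto
  hence "(\<lambda>T. T \<circ> b) ` ?L \<subseteq> ?L"
    by (rule image_closure_of_subset_closedin[OF continuous_map_comp_right[OF subsetD[OF LB b]] _ cl])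
  thus ?thesis using a by blast
qed

lemma ospan_subset_op_subspace: "G \<subseteq> S \<Longrightarrow> op_subspace A S \<Longrightarrow> ospan G \<subseteq> S"
proof
  fix x assume G: "G \<subseteq> S" and S: "op_subspace A S" and x: "x \<in> ospan G"
  from x show "x \<in> S"
    by induction (use G S in \<open>auto simp: op_subspace_def\<close>)
qed

lemma ospan_subset_subalg: "G \<subseteq> S \<Longrightarrow> subalg A S \<Longrightarrow> ospan G \<subseteq> S"
  by (rule ospan_subset_op_subspace) (auto simp: op_subspace_def subalg_def)

lemma op_subspace_ospan: "G \<subseteq> Bop A \<Longrightarrow> op_subspace A (ospan G)"
proof -
  assume G: "G \<subseteq> Bop A"
  have B: "ospan G \<subseteq> Bop A"
  proof
    fix x assume "x \<in> ospan G" thus "x \<in> Bop A"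
      by induction (use G in \<open>auto simp: Bop_iff bop_ozero bop_oadd bop_oscale\<close>)
  qed
  have add: "oadd a b \<in> ospan G" if a: "a \<in> ospan G" and b: "b \<in> ospan G" for a b
    using a
  proof induction
    case ospan_zero
    have "oadd ozero b = b" by (simp add: oadd_def ozero_def)
    then show ?case using b by simp
  next
    case (ospan_step S T c)
    have "oadd (oadd (oscale c T) S) b = oadd (oscale c T) (oadd S b)" by (simp add: oadd_def add.assoc)
    then show ?case using ospan_step by (simp add: ospan.ospan_step)
  qed
  have sc: "oscale d a \<in> ospan G" if a: "a \<in> ospan G" for a d
    using a
  proof induction
    case ospan_zero
    show ?case using ospan.ospan_zero[of G] by (simp add: oscale_def ozero_def)
  next
    case (ospan_step S T c)
    have "oscale d (oadd (oscale c T) S) = oadd (oscale (d*c) T) (oscale d S)"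
      by (simp add: oadd_def oscale_def algebra_simps)
    then show ?case using ospan_step by (simp add: ospan.ospan_step)
  qed
  show ?thesis using B add sc by (simp add: op_subspace_def ospan.ospan_zero)
qed

lemma ospan_superset: "g \<in> G \<Longrightarrow> g \<in> ospan G"
proof -
  assume g: "g \<in> G"
  have "oadd (oscale 1 g) ozero \<in> ospan G" by (rule ospan.ospan_step[OF ospan.ospan_zero g])
  moreover have "oadd (oscale 1 g) ozero = g" by (simp add: oadd_def oscale_def ozero_def)
  ultimately show ?thesis by simp
qed

lemma ospan_comp_closed:
  assumes GB: "G \<subseteq> Bop A" and lin: "op_subspace A L" and gh: "\<And>g h. g \<in> G \<Longrightarrow> h \<in> G \<Longrightarrow> g \<circ> h \<in> L"
    and a: "a \<in> ospan G" and b: "b \<in> ospan G"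
  shows "a \<circ> b \<in> L"
proof -
  have SB: "ospan G \<subseteq> Bop A" using op_subspace_ospan[OF GB] by (simp add: op_subspace_def)
  have L: "ozero \<in> L" "\<And>x y. x \<in> L \<Longrightarrow> y \<in> L \<Longrightarrow> oadd x y \<in> L" "\<And>c x. x \<in> L \<Longrightarrow> oscale c x \<in> L"
    using lin by (auto simp: op_subspace_def)
  have gb: "g \<circ> b \<in> L" if g: "g \<in> G" and b: "b \<in> ospan G" for g b
    using b
  proof induction
    case ospan_zero
    have "bop A A g" using g GB by (auto simp: Bop_iff)
    then show ?case using L(1) by (simp add: comp_ozero)
  next
    case (ospan_step S T c)
    have gb: "bop A A g" using g GB by (auto simp: Bop_iff)
    have Sb: "bop A A S" and Tb: "bop A A T" using ospan_step(1) ospan_step(2) SB GB by (auto simp: Bop_iff)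
    have "g \<circ> oadd (oscale c T) S = oadd (oscale c (g \<circ> T)) (g \<circ> S)"
      by (simp add: comp_oadd_right[OF gb bop_oscale[OF Tb] Sb] comp_oscale_right[OF gb Tb])
    show ?case unfolding \<open>g \<circ> oadd (oscale c T) S = _\<close>
      by (rule L(2)[OF L(3)[OF gh[OF g ospan_step.hyps(2)]] ospan_step.IH])
  qed
  show ?thesis
    using a
  proof induction
    case ospan_zero
    then show ?case using L(1) by (simp add: ozero_comp)
  next
    case (ospan_step S T c)
    have "oadd (oscale c T) S \<circ> b = oadd (oscale c (T \<circ> b)) (S \<circ> b)"
      by (simp add: oadd_comp oscale_comp)
    show ?case unfolding \<open>oadd (oscale c T) S \<circ> b = _\<close>
      by (rule L(2)[OF L(3)[OF gb[OF ospan_step.hyps(2) b]] ospan_step.IH])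
  qed
qed

lemma op_subspace_wspan: "G \<subseteq> Bop A \<Longrightarrow> op_subspace A (wspan A G)"
  unfolding wspan_def by (rule op_subspace_closure_of[OF op_subspace_ospan])

lemma wspan_superset:
  assumes "G \<subseteq> Bop A"
  shows "G \<subseteq> wspan A G"
proof -
  have "ospan G \<subseteq> topspace (wstar A)"
    using op_subspace_ospan[OF assms] by (simp add: op_subspace_def topspace_wstar)
  then show ?thesis
    unfolding wspan_def using closure_of_subset ospan_superset by blast
qed

lemma wspan_eq_walg:
  assumes G: "G \<subseteq> Bop A" and prod: "\<And>g h. g \<in> G \<Longrightarrow> h \<in> G \<Longrightarrow> g \<circ> h \<in> wspan A G"
  shows "wspan A G = walg A G"
proof
  show "wspan A G \<subseteq> walg A G"
    unfolding wspan_def walg_def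
    by (intro Inter_greatest closure_of_minimal ospan_subset_subalg) auto
next
  have "wspan A G \<in> {S. G \<subseteq> S \<and> subalg A S \<and> closedin (wstar A) S}"
  proof -
    have SB: "ospan G \<subseteq> Bop A" using op_subspace_ospan[OF G] by (simp add: op_subspace_def)
    have "a \<circ> b \<in> wspan A G" if "a \<in> ospan G" "b \<in> ospan G" for a b
      by (rule ospan_comp_closed[OF G op_subspace_wspan[OF G] prod that])
    then have "a \<circ> b \<in> wspan A G" if "a \<in> wspan A G" "b \<in> wspan A G" for a b
      using closure_of_comp_closed[OF SB] that unfolding wspan_def by blast
    then show ?thesis
      using op_subspace_wspan[OF G] wspan_superset[OF G] by (auto simp: op_subspace_def subalg_def wspan_def)
  qed
  then show "walg A G \<subseteq> wspan A G" unfolding walg_def by blast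
qed

section \<open>Slices\<close>

definition slice :: "('x \<times> 'w) vec \<Rightarrow> 'w \<Rightarrow> 'x vec" where "slice f w = (\<lambda>x. f (x, w))"

lemma slice_add: "slice (\<lambda>x. f x + g x) w = (\<lambda>x. slice f w x + slice g w x)" by (simp add: slice_def)

lemma slice_scale: "slice (\<lambda>x. c * f x) w = (\<lambda>x. c * slice f w x)" by (simp add: slice_def)

lemma slice_eqI: "(\<And>w. slice f w = slice g w) \<Longrightarrow> f = g"
  by (rule ext) (metis slice_def surj_pair)

lemma slice_ell2: "f \<in> ell2 (UNIV \<times> W) \<Longrightarrow> slice f w \<in> ell2 UNIV"
  unfolding slice_def by (rule ell2I) (auto intro: summable_on_prod_slice[OF ell2_summable])

lemma slice_outside: "f \<in> ell2 (UNIV \<times> W) \<Longrightarrow> w \<notin> W \<Longrightarrow> slice f w = (\<lambda>_. 0)"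
  by (auto simp: slice_def ell2_vanishes)

lemma norm2_slice_sq: "f \<in> ell2 (UNIV \<times> W) \<Longrightarrow> (norm2 (slice f w))^2 = infsum (\<lambda>x. (cmod (f (x,w)))^2) UNIV"
  using norm2_sq_eq[OF slice_ell2] by (simp add: slice_def)

lemma norm2_slice_summable: "f \<in> ell2 (UNIV \<times> W) \<Longrightarrow> (\<lambda>w. (norm2 (slice f w))^2) summable_on UNIV"
  using summable_on_prod_outer[OF ell2_summable, of f] by (simp add: norm2_slice_sq)

lemma norm2_sq_eq_infsum_slices: "f \<in> ell2 (UNIV \<times> W) \<Longrightarrow> (norm2 f)^2 = infsum (\<lambda>w. (norm2 (slice f w))^2) UNIV"
  using infsum_swap_prod[OF ell2_summable, of f] by (simp add: norm2_slice_sq norm2_sq_eq)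

lemma norm2_slice_le: "F \<in> ell2 (UNIV \<times> J) \<Longrightarrow> norm2 (slice F k) \<le> norm2 F"
proof -
  assume F: "F \<in> ell2 (UNIV \<times> J)"
  have "(norm2 (slice F k))^2 \<le> infsum (\<lambda>w. (norm2 (slice F w))^2) UNIV"
    by (rule infsum_ge_term[OF norm2_slice_summable[OF F]]) simp
  also have "\<dots> = (norm2 F)^2" by (rule norm2_sq_eq_infsum_slices[OF F, symmetric])
  finally show ?thesis by (rule power2_le_imp_le) simp
qed

lemma ell2_from_slices:
  fixes F :: "('x \<times> 'w) vec"
  assumes slice: "\<And>w. slice F w \<in> ell2 UNIV" and s: "(\<lambda>w. (norm2 (slice F w))^2) summable_on UNIV"
    and out: "\<And>x w. w \<notin> W \<Longrightarrow> F (x,w) = 0"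
  shows "F \<in> ell2 (UNIV \<times> W)" "(norm2 F)^2 = infsum (\<lambda>w. (norm2 (slice F w))^2) UNIV"
proof -
  have hs: "((\<lambda>x. (\<lambda>(w,x). (cmod (F (x,w)))^2) (w,x)) has_sum (norm2 (slice F w))^2) UNIV" for w
    using norm2_sq_eq[OF slice[of w]] ell2_summable[OF slice[of w]] by (simp add: slice_def has_sum_infsum)
  have "(\<lambda>(w,x). (cmod (F (x,w)))^2) summable_on Sigma UNIV (\<lambda>_. UNIV)"
    by (rule summable_on_SigmaI[OF _ s]) (use hs in auto)
  hence s2: "(\<lambda>(w,x). (cmod (F (x,w)))^2) summable_on UNIV" by simp
  have "(\<lambda>(x,w). (\<lambda>(w,x). (cmod (F (x,w)))^2) (w,x)) summable_on UNIV"
    by (rule summable_on_UNIV_swap[OF s2])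
  hence s3: "(\<lambda>p. (cmod (F p))^2) summable_on UNIV" by (simp add: case_prod_unfold)
  show ell: "F \<in> ell2 (UNIV \<times> W)" by (rule ell2I) (use out s3 in auto)
  show "(norm2 F)^2 = infsum (\<lambda>w. (norm2 (slice F w))^2) UNIV" by (rule norm2_sq_eq_infsum_slices[OF ell])
qed

lemma ip_eq_infsum_slices: "F \<in> ell2 (UNIV \<times> W) \<Longrightarrow> G \<in> ell2 (UNIV \<times> W') \<Longrightarrow>
   ip F G = infsum (\<lambda>w. ip (slice F w) (slice G w)) UNIV"
  unfolding ip_def slice_def by (rule infsum_swap_prod[OF ip_summable])

section \<open>Tensor shifts\<close>

text \<open>\<open>tensor_shift d \<sigma> u\<close> is \<open>u \<otimes> S\<^sub>\<sigma>\<close> with \<open>S\<^sub>\<sigma> e\<^sub>w = e\<^bsub>\<sigma> w\<^esub>\<close>; the operators \<open>\<rho>(y)\<close>,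
  \<open>u\<^sub>i\<^sub>,\<^sub>j \<otimes> l\<^sub>i\<close> and \<open>u\<^sub>i\<^sub>,\<^sub>j \<otimes> r\<^sub>i\<close> are the cases \<open>\<sigma> w = w\<close>, \<open>\<sigma> w = i w\<close> and \<open>\<sigma> w = w i\<close>.\<close>

definition tensor_shift :: "enat \<Rightarrow> (nat list \<Rightarrow> nat list) \<Rightarrow> ('x,'x) op \<Rightarrow> ('x \<times> nat list, 'x \<times> nat list) op" where
  "tensor_shift d \<sigma> u = (\<lambda>f. if f \<in> ell2 (UNIV \<times> words d)
      then (\<lambda>(x,w'). if w' \<in> range \<sigma> then u (slice f (inv \<sigma> w')) x else 0) else (\<lambda>_. 0))"

definition word_embedding :: "enat \<Rightarrow> (nat list \<Rightarrow> nat list) \<Rightarrow> bool" where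
  "word_embedding d \<sigma> \<longleftrightarrow> inj_on \<sigma> UNIV \<and> (\<forall>w. \<sigma> w \<in> words d \<longleftrightarrow> w \<in> words d)"

lemma word_embedding_inj: "word_embedding d \<sigma> \<Longrightarrow> inj_on \<sigma> UNIV" by (simp add: word_embedding_def)

lemma word_embedding_words: "word_embedding d \<sigma> \<Longrightarrow> \<sigma> w \<in> words d \<longleftrightarrow> w \<in> words d" by (simp add: word_embedding_def)

lemma word_embedding_id: "word_embedding d id" by (simp add: word_embedding_def)

lemma word_embedding_Cons: "i \<in> idx d \<Longrightarrow> word_embedding d ((#) i)" by (simp add: word_embedding_def words_def)

lemma word_embedding_snoc: "i \<in> idx d \<Longrightarrow> word_embedding d (\<lambda>w. w @ [i])"
  by (auto simp: word_embedding_def words_def inj_on_def)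

lemma word_embedding_comp: "word_embedding d \<tau> \<Longrightarrow> word_embedding d \<sigma> \<Longrightarrow> word_embedding d (\<tau> \<circ> \<sigma>)"
  by (auto simp: word_embedding_def intro: inj_compose)

lemma slice_tensor_shift_image:
  "word_embedding d \<sigma> \<Longrightarrow> f \<in> ell2 (UNIV \<times> words d) \<Longrightarrow> slice (tensor_shift d \<sigma> u f) (\<sigma> w) = u (slice f w)"
  by (simp add: tensor_shift_def slice_def word_embedding_inj)

lemma slice_tensor_shift_outside: "w' \<notin> range \<sigma> \<Longrightarrow> slice (tensor_shift d \<sigma> u f) w' = (\<lambda>_. 0)"
  by (simp add: tensor_shift_def slice_def)

lemma tensor_shift_outside: "f \<notin> ell2 (UNIV \<times> words d) \<Longrightarrow> tensor_shift d \<sigma> u f = (\<lambda>_. 0)"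
  by (simp add: tensor_shift_def)

lemma tensor_shift_vanishes:
  assumes g: "word_embedding d \<sigma>" and u: "bop UNIV UNIV u" and f: "f \<in> ell2 (UNIV \<times> words d)" and w: "w' \<notin> words d"
  shows "tensor_shift d \<sigma> u f (x, w') = 0"
proof (cases "w' \<in> range \<sigma>")
  case True
  then obtain w where w': "w' = \<sigma> w" by blast
  hence "w \<notin> words d" using w word_embedding_words[OF g] by simp
  hence "slice f w = (\<lambda>_. 0)" by (rule slice_outside[OF f])
  thus ?thesis using w' g f bop_zero[OF u] by (simp add: tensor_shift_def word_embedding_inj)
qed (simp add: tensor_shift_def)

lemma tensor_shift_ell2:
  assumes g: "word_embedding d \<sigma>" and u: "bop UNIV UNIV u" and C: "C \<ge> 0" "\<And>h. h \<in> ell2 UNIV \<Longrightarrow> norm2 (u h) \<le> C * norm2 h"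
    and f: "f \<in> ell2 (UNIV \<times> words d)"
  shows "tensor_shift d \<sigma> u f \<in> ell2 (UNIV \<times> words d)" "norm2 (tensor_shift d \<sigma> u f) \<le> C * norm2 f"
proof -
  let ?F = "tensor_shift d \<sigma> u f"
  have inj: "inj_on \<sigma> UNIV" by (rule word_embedding_inj[OF g])
  have slF: "slice ?F w' \<in> ell2 UNIV" for w'
    by (cases "w' \<in> range \<sigma>")
      (auto simp: slice_tensor_shift_image[OF g f] slice_tensor_shift_outside bopD_ell2[OF u slice_ell2[OF f]])
  have z: "\<And>w'. w' \<notin> range \<sigma> \<Longrightarrow> (norm2 (slice ?F w'))^2 = 0" by (simp add: slice_tensor_shift_outside)
  have cmp: "(norm2 (slice ?F (\<sigma> w)))^2 \<le> C^2 * (norm2 (slice f w))^2" for w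
  proof -
    have "(norm2 (u (slice f w)))^2 \<le> (C * norm2 (slice f w))^2"
      by (rule power_mono[OF C(2)[OF slice_ell2[OF f]]]) simp
    thus ?thesis by (simp add: slice_tensor_shift_image[OF g f] power_mult_distrib)
  qed
  have s1: "(\<lambda>w. C^2 * (norm2 (slice f w))^2) summable_on UNIV"
    by (rule summable_on_cmult_right[OF norm2_slice_summable[OF f]])
  have s2: "(\<lambda>w. (norm2 (slice ?F (\<sigma> w)))^2) summable_on UNIV"
    by (rule summable_on_comparison_test[OF s1]) (use cmp in auto)
  have s3: "(\<lambda>w'. (norm2 (slice ?F w'))^2) summable_on UNIV"
    using summable_on_reindex_range[OF inj z] s2 by simp
  have e: "?F \<in> ell2 (UNIV \<times> words d) \<and> (norm2 ?F)^2 = infsum (\<lambda>w'. (norm2 (slice ?F w'))^2) UNIV"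
    using ell2_from_slices[OF slF s3, of "words d"] tensor_shift_vanishes[OF g u f] by blast
  thus "?F \<in> ell2 (UNIV \<times> words d)" by simp
  have "(norm2 ?F)^2 = infsum (\<lambda>w. (norm2 (slice ?F (\<sigma> w)))^2) UNIV"
    using e infsum_reindex_range[OF inj z] by simp
  also have "\<dots> \<le> infsum (\<lambda>w. C^2 * (norm2 (slice f w))^2) UNIV"
    by (rule infsum_mono[OF s2 s1 cmp])
  also have "\<dots> = C^2 * (norm2 f)^2"
    by (simp add: infsum_cmult_right' norm2_sq_eq_infsum_slices[OF f])
  also have "\<dots> = (C * norm2 f)^2" by (simp add: power_mult_distrib)
  finally show "norm2 ?F \<le> C * norm2 f"
    by (rule power2_le_imp_le) (simp add: C)
qed

lemma bop_tensor_shift: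
  fixes u :: "('x,'x) op"
  assumes g: "word_embedding d \<sigma>" and u: "bop UNIV UNIV u"
  shows "bop (UNIV \<times> words d) (UNIV \<times> words d) (tensor_shift d \<sigma> u)"
proof -
  obtain C where C: "C \<ge> 0" "\<And>h. h \<in> ell2 UNIV \<Longrightarrow> norm2 (u h) \<le> C * norm2 h" using bop_bound[OF u] by blast
  show ?thesis unfolding bop_def
  proof (intro conjI ballI allI impI)
    fix f :: "('x \<times> nat list) vec" assume f: "f \<in> ell2 (UNIV \<times> words d)"
    show "tensor_shift d \<sigma> u f \<in> ell2 (UNIV \<times> words d)" by (rule tensor_shift_ell2(1)[OF g u C f])
    show "\<And>c. tensor_shift d \<sigma> u (\<lambda>x. c * f x) = (\<lambda>y. c * tensor_shift d \<sigma> u f y)"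
      using f by (auto simp: tensor_shift_def ell2_scale slice_scale bopD_scale[OF u slice_ell2[OF f]])
    fix h :: "('x \<times> nat list) vec" assume h: "h \<in> ell2 (UNIV \<times> words d)"
    show "tensor_shift d \<sigma> u (\<lambda>x. f x + h x) = (\<lambda>y. tensor_shift d \<sigma> u f y + tensor_shift d \<sigma> u h y)"
      using f h by (auto simp: tensor_shift_def ell2_add slice_add bopD_add[OF u slice_ell2[OF f] slice_ell2[OF h]])
  next
    show "\<exists>K. \<forall>f\<in>ell2 ((UNIV::'x set) \<times> words d). norm2 (tensor_shift d \<sigma> u f) \<le> K * norm2 f"
      using tensor_shift_ell2(2)[OF g u C] by blast
  next
    fix f :: "('x \<times> nat list) vec" assume "f \<notin> ell2 (UNIV \<times> words d)"
    thus "tensor_shift d \<sigma> u f = (\<lambda>_. 0)" by (rule tensor_shift_outside)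
  qed
qed

lemma tensor_shift_zero: "word_embedding d \<sigma> \<Longrightarrow> bop UNIV UNIV u \<Longrightarrow> tensor_shift d \<sigma> u (\<lambda>_. 0) = (\<lambda>_. 0)"
  by (rule bop_zero[OF bop_tensor_shift])

lemma tensor_shift_ozero: "tensor_shift d \<sigma> ozero = ozero"
  by (auto simp: tensor_shift_def ozero_def fun_eq_iff)

lemma tensor_shift_oadd: "tensor_shift d \<sigma> (oadd a b) = oadd (tensor_shift d \<sigma> a) (tensor_shift d \<sigma> b)"
  by (auto simp: tensor_shift_def oadd_def fun_eq_iff)

lemma tensor_shift_comp:
  fixes a b :: "('x,'x) op"
  assumes gt: "word_embedding d \<tau>" and gs: "word_embedding d \<sigma>" and a: "bop UNIV UNIV a" and b: "bop UNIV UNIV b"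
  shows "tensor_shift d \<tau> a \<circ> tensor_shift d \<sigma> b = tensor_shift d (\<tau> \<circ> \<sigma>) (a \<circ> b)"
proof (rule ext)
  fix f :: "('x \<times> nat list) vec"
  show "(tensor_shift d \<tau> a \<circ> tensor_shift d \<sigma> b) f = tensor_shift d (\<tau> \<circ> \<sigma>) (a \<circ> b) f"
  proof (cases "f \<in> ell2 (UNIV \<times> words d)")
    case f: True
    have G: "tensor_shift d \<sigma> b f \<in> ell2 (UNIV \<times> words d)" by (rule bopD_ell2[OF bop_tensor_shift[OF gs b] f])
    show ?thesis
    proof (rule slice_eqI)
      fix w''
      consider (image) w where "w'' = \<tau> (\<sigma> w)" | (gap) w' where "w'' = \<tau> w'" "w' \<notin> range \<sigma>"
        | (outside) "w'' \<notin> range \<tau>"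
        by blast
      then show "slice ((tensor_shift d \<tau> a \<circ> tensor_shift d \<sigma> b) f) w'' = slice (tensor_shift d (\<tau> \<circ> \<sigma>) (a \<circ> b) f) w''"
      proof cases
        case image
        then show ?thesis
          using slice_tensor_shift_image[OF word_embedding_comp[OF gt gs] f, of "a \<circ> b" w]
          by (simp add: slice_tensor_shift_image[OF gt G] slice_tensor_shift_image[OF gs f])
      next
        case gap
        then have "w'' \<notin> range (\<tau> \<circ> \<sigma>)"
          using word_embedding_inj[OF gt] by (auto simp: inj_on_def)
        with gap show ?thesis
          by (simp add: slice_tensor_shift_image[OF gt G] slice_tensor_shift_outside bop_zero[OF a])
      next
        case outside
        then have "w'' \<notin> range (\<tau> \<circ> \<sigma>)" by auto
        with outside show ?thesis by (simp add: slice_tensor_shift_outside)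
      qed
    qed
  next
    case False
    then show ?thesis by (simp add: tensor_shift_outside tensor_shift_zero[OF gt a])
  qed
qed

lemma rho_eq_tensor_shift: "rho d y = tensor_shift d id y"
  by (rule ext) (simp add: rho_def tensor_shift_def slice_def)

lemma tensl_eq_tensor_shift: "tensl d i u = tensor_shift d ((#) i) u"
proof (rule ext)
  fix f
  show "tensl d i u f = tensor_shift d ((#) i) u f"
  proof (cases "f \<in> ell2 (UNIV \<times> words d)")
    case True
    have inj: "inj_on ((#) i) UNIV" by simp
    show ?thesis
    proof (rule ext, clarify)
      fix x w'
      show "tensl d i u f (x, w') = tensor_shift d ((#) i) u f (x, w')"
      proof (cases w')
        case Nil then show ?thesis using True by (auto simp: tensl_def tensor_shift_def)
      next
        case (Cons k w)
        show ?thesis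
        proof (cases "k = i")
          case True
          then show ?thesis using Cons \<open>f \<in> _\<close> by (simp add: tensl_def tensor_shift_def slice_def inv_f_f[OF inj])
        next
          case False
          then show ?thesis using Cons \<open>f \<in> _\<close> by (auto simp: tensl_def tensor_shift_def)
        qed
      qed
    qed
  qed (simp add: tensl_def tensor_shift_def)
qed

lemma tensr_eq_tensor_shift: "tensr d i u = tensor_shift d (\<lambda>w. w @ [i]) u"
proof (rule ext)
  fix f
  show "tensr d i u f = tensor_shift d (\<lambda>w. w @ [i]) u f"
  proof (cases "f \<in> ell2 (UNIV \<times> words d)")
    case True
    have inj: "inj_on (\<lambda>w::nat list. w @ [i]) UNIV" by (simp add: inj_on_def)
    show ?thesis
    proof (rule ext, clarify)
      fix x w'
      show "tensr d i u f (x, w') = tensor_shift d (\<lambda>w. w @ [i]) u f (x, w')"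
      proof (cases "w' \<noteq> [] \<and> last w' = i")
        case c: True
        hence e: "w' = butlast w' @ [i]" by (metis append_butlast_last_id)
        hence r: "w' \<in> range (\<lambda>w. w @ [i])" by blast
        have "inv (\<lambda>w. w @ [i]) w' = butlast w'"
          by (subst e, subst inv_f_f[OF inj]) simp
        then show ?thesis using c r True by (simp add: tensr_def tensor_shift_def slice_def)
      next
        case c: False
        hence "w' \<notin> range (\<lambda>w. w @ [i])" by auto
        then show ?thesis using c True by (auto simp: tensr_def tensor_shift_def)
      qed
    qed
  qed (simp add: tensr_def tensor_shift_def)
qed

lemma ip_tensor_shift:
  fixes u :: "('x,'x) op"
  assumes g: "word_embedding d \<sigma>" and u: "bop UNIV UNIV u"
    and F: "F \<in> ell2 (UNIV \<times> words d)" and G: "G \<in> ell2 (UNIV \<times> words d)"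
  shows "ip F (tensor_shift d \<sigma> u G) = infsum (\<lambda>w. ip (slice F (\<sigma> w)) (u (slice G w))) UNIV"
proof -
  have TG: "tensor_shift d \<sigma> u G \<in> ell2 (UNIV \<times> words d)" by (rule bopD_ell2[OF bop_tensor_shift[OF g u] G])
  have "ip F (tensor_shift d \<sigma> u G) = infsum (\<lambda>w'. ip (slice F w') (slice (tensor_shift d \<sigma> u G) w')) UNIV"
    by (rule ip_eq_infsum_slices[OF F TG])
  also have "\<dots> = infsum (\<lambda>w. ip (slice F (\<sigma> w)) (slice (tensor_shift d \<sigma> u G) (\<sigma> w))) UNIV"
    by (rule infsum_reindex_range[OF word_embedding_inj[OF g]]) (simp add: slice_tensor_shift_outside)
  also have "\<dots> = infsum (\<lambda>w. ip (slice F (\<sigma> w)) (u (slice G w))) UNIV"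
    by (simp add: slice_tensor_shift_image[OF g G])
  finally show ?thesis .
qed

lemma norm2_slice_reindex:
  assumes g: "word_embedding d \<sigma>" and F: "F \<in> ell2 (UNIV \<times> words d)"
  shows "(\<lambda>w. (norm2 (slice F (\<sigma> w)))^2) summable_on UNIV"
    "infsum (\<lambda>w. (norm2 (slice F (\<sigma> w)))^2) UNIV \<le> (norm2 F)^2"
proof -
  have s: "(\<lambda>w'. (norm2 (slice F w'))^2) summable_on UNIV" by (rule norm2_slice_summable[OF F])
  have sr: "(\<lambda>w'. (norm2 (slice F w'))^2) summable_on range \<sigma>" by (rule summable_on_subset_banach[OF s]) simp
  have inj: "inj_on \<sigma> UNIV" by (rule word_embedding_inj[OF g])
  have "((\<lambda>w'. (norm2 (slice F w'))^2) \<circ> \<sigma>) summable_on UNIV"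
    using summable_on_reindex[OF inj] sr by blast
  thus s2: "(\<lambda>w. (norm2 (slice F (\<sigma> w)))^2) summable_on UNIV" by (simp add: o_def)
  have "infsum (\<lambda>w. (norm2 (slice F (\<sigma> w)))^2) UNIV = infsum (\<lambda>w'. (norm2 (slice F w'))^2) (range \<sigma>)"
    using infsum_reindex[OF inj, of "\<lambda>w'. (norm2 (slice F w'))^2"] by (simp add: o_def)
  also have "\<dots> \<le> infsum (\<lambda>w'. (norm2 (slice F w'))^2) UNIV"
    by (rule infsum_mono2[OF sr s]) auto
  also have "\<dots> = (norm2 F)^2" by (rule norm2_sq_eq_infsum_slices[OF F, symmetric])
  finally show "infsum (\<lambda>w. (norm2 (slice F (\<sigma> w)))^2) UNIV \<le> (norm2 F)^2" .
qed

lemma ip_tensor_shift_dominated: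
  fixes a :: "nat \<Rightarrow> ('x,'x) op" and a0 :: "('x,'x) op"
  assumes g: "word_embedding d \<sigma>" and a: "\<And>m. bop UNIV UNIV (a m)" and a0: "bop UNIV UNIV a0"
    and lim: "\<And>f h. f \<in> ell2 UNIV \<Longrightarrow> h \<in> ell2 UNIV \<Longrightarrow> (\<lambda>m. ip f (a m h)) \<longlonglongrightarrow> ip f (a0 h)"
    and M: "M \<ge> 0"
    and bnd: "\<And>m f h. f \<in> ell2 UNIV \<Longrightarrow> h \<in> ell2 UNIV \<Longrightarrow> cmod (ip f (a m h)) \<le> M * ((norm2 f)^2 + (norm2 h)^2)"
    and F: "F \<in> ell2 (UNIV \<times> words d)" and G: "G \<in> ell2 (UNIV \<times> words d)"
  shows "(\<lambda>m. ip F (tensor_shift d \<sigma> (a m) G)) \<longlonglongrightarrow> ip F (tensor_shift d \<sigma> a0 G)"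
    and "cmod (ip F (tensor_shift d \<sigma> (a m) G)) \<le> M * ((norm2 F)^2 + (norm2 G)^2)"
proof -
  define h where "h w = M * ((norm2 (slice F (\<sigma> w)))^2 + (norm2 (slice G w))^2)" for w
  have hs: "h summable_on UNIV"
    unfolding h_def
    by (intro summable_on_cmult_right summable_on_add norm2_slice_reindex(1)[OF g F] norm2_slice_summable[OF G])
  have term_le: "cmod (ip (slice F (\<sigma> w)) (a m (slice G w))) \<le> h w" for m w
    unfolding h_def by (rule bnd[OF slice_ell2[OF F] slice_ell2[OF G]])
  show "(\<lambda>m. ip F (tensor_shift d \<sigma> (a m) G)) \<longlonglongrightarrow> ip F (tensor_shift d \<sigma> a0 G)"
    unfolding ip_tensor_shift[OF g a F G] ip_tensor_shift[OF g a0 F G]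
    by (rule infsum_dominated_convergence[OF hs term_le lim[OF slice_ell2[OF F] slice_ell2[OF G]]])
  have "cmod (ip F (tensor_shift d \<sigma> (a m) G)) \<le> infsum h UNIV"
    unfolding ip_tensor_shift[OF g a F G] by (rule norm_infsum_le_dominating[OF hs term_le])
  also have "\<dots> = M * (infsum (\<lambda>w. (norm2 (slice F (\<sigma> w)))^2) UNIV + infsum (\<lambda>w. (norm2 (slice G w))^2) UNIV)"
    unfolding h_def
    by (simp only: infsum_cmult_right' infsum_add[OF norm2_slice_reindex(1)[OF g F] norm2_slice_summable[OF G]])
  also have "\<dots> \<le> M * ((norm2 F)^2 + (norm2 G)^2)"
    using norm2_slice_reindex(2)[OF g F] norm2_sq_eq_infsum_slices[OF G] M by (intro mult_left_mono) auto
  finally show "cmod (ip F (tensor_shift d \<sigma> (a m) G)) \<le> M * ((norm2 F)^2 + (norm2 G)^2)" .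
qed

lemma nfun_tensor_shift_tendsto:
  fixes a :: "nat \<Rightarrow> ('x,'x) op" and a0 :: "('x,'x) op"
  assumes g: "word_embedding d \<sigma>" and np: "normal_pair (UNIV \<times> words d) \<xi> \<eta>"
    and a: "\<And>m. bop UNIV UNIV (a m)" and a0: "bop UNIV UNIV a0"
    and lim: "\<And>f h. f \<in> ell2 UNIV \<Longrightarrow> h \<in> ell2 UNIV \<Longrightarrow> (\<lambda>m. ip f (a m h)) \<longlonglongrightarrow> ip f (a0 h)"
    and M: "M \<ge> 0"
    and bnd: "\<And>m f h. f \<in> ell2 UNIV \<Longrightarrow> h \<in> ell2 UNIV \<Longrightarrow> cmod (ip f (a m h)) \<le> M * ((norm2 f)^2 + (norm2 h)^2)"
  shows "(\<lambda>m. nfun \<xi> \<eta> (tensor_shift d \<sigma> (a m))) \<longlonglongrightarrow> nfun \<xi> \<eta> (tensor_shift d \<sigma> a0)"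
proof -
  note dom = ip_tensor_shift_dominated[OF g a a0 lim M bnd normal_pairD(1,2)[OF np]]
  have lim_k: "(\<lambda>m. ip (\<xi> k) (tensor_shift d \<sigma> (a m) (\<eta> k))) \<longlonglongrightarrow> ip (\<xi> k) (tensor_shift d \<sigma> a0 (\<eta> k))" for k
    by (rule dom(1))
  have sM: "summable (\<lambda>k. M * ((norm2 (\<xi> k))^2 + (norm2 (\<eta> k))^2))"
    using normal_pairD(3,4)[OF np] by (intro summable_mult summable_add)
  have ev: "eventually (\<lambda>(k,m). norm (ip (\<xi> k) (tensor_shift d \<sigma> (a m) (\<eta> k)))
      \<le> M * ((norm2 (\<xi> k))^2 + (norm2 (\<eta> k))^2)) (at_top \<times>\<^sub>F sequentially)"
    by (rule always_eventually) (simp add: case_prod_unfold dom(2))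
  show ?thesis
    unfolding nfun_def using tannerys_theorem[OF lim_k ev sM sequentially_bot] by blast
qed

section \<open>Rows and columns\<close>

lemma slice_inj: "g \<in> ell2 UNIV \<Longrightarrow> slice (inj j g) k = (if k = j then g else (\<lambda>_. 0))"
  by (auto simp: inj_def slice_def)

lemma inj_ell2:
  assumes j: "j \<in> J" and g: "g \<in> ell2 UNIV"
  shows "inj j g \<in> ell2 (UNIV \<times> J)" "norm2 (inj j g) = norm2 g"
proof -
  have s: "(\<lambda>k. (norm2 (slice (inj j g) k))^2) summable_on UNIV"
    by (rule summable_on_finite_support[of "{j}"]) (auto simp: slice_inj[OF g])
  have slice: "\<And>k. slice (inj j g) k \<in> ell2 UNIV" by (simp add: slice_inj[OF g] g)
  have out: "\<And>x k. k \<notin> J \<Longrightarrow> inj j g (x, k) = 0" using j g by (auto simp: inj_def)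
  show e: "inj j g \<in> ell2 (UNIV \<times> J)" by (rule ell2_from_slices(1)[OF slice s out])
  have "(norm2 (inj j g))^2 = infsum (\<lambda>k. (norm2 (slice (inj j g) k))^2) UNIV"
    by (rule ell2_from_slices(2)[OF slice s out])
  also have "\<dots> = (\<Sum>k\<in>{j}. (norm2 (slice (inj j g) k))^2)"
    by (rule infsum_finite_support) (auto simp: slice_inj[OF g])
  also have "\<dots> = (norm2 g)^2" by (simp add: slice_inj[OF g])
  finally show "norm2 (inj j g) = norm2 g" by (simp add: power2_eq_iff_nonneg)
qed

lemma bop_inj: "j \<in> J \<Longrightarrow> bop UNIV (UNIV \<times> J) (inj j :: ('x, 'x \<times> nat) op)"
  unfolding bop_def
proof (intro conjI ballI allI impI)
  fix f :: "'x vec" assume j: "j \<in> J" and f: "f \<in> ell2 UNIV"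
  show "inj j f \<in> ell2 (UNIV \<times> J)" by (rule inj_ell2(1)[OF j f])
  show "\<And>c. inj j (\<lambda>x. c * f x) = (\<lambda>y. c * inj j f y)" using f by (auto simp: inj_def ell2_scale)
  fix g :: "'x vec" assume g: "g \<in> ell2 UNIV"
  show "inj j (\<lambda>x. f x + g x) = (\<lambda>y. inj j f y + inj j g y)" using f g by (auto simp: inj_def ell2_add)
next
  assume j: "j \<in> J"
  show "\<exists>C. \<forall>f\<in>ell2 (UNIV::'x set). norm2 (inj j f) \<le> C * norm2 f"
  proof (intro exI[of _ 1] ballI)
    fix f :: "'x vec" assume f: "f \<in> ell2 UNIV"
    show "norm2 (inj j f) \<le> 1 * norm2 f" using inj_ell2(2)[OF j f] by simp
  qed
next
  fix f :: "'x vec" assume "f \<notin> ell2 UNIV" thus "inj j f = (\<lambda>_. 0)" by (simp add: inj_def)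
qed

definition column_entry :: "('x, 'x \<times> nat) op \<Rightarrow> nat \<Rightarrow> ('x,'x) op" where "column_entry V k = (\<lambda>g. slice (V g) k)"

lemma bop_column_entry:
  fixes V :: "('x, 'x \<times> nat) op"
  assumes V: "bop UNIV (UNIV \<times> J) V"
  shows "bop UNIV UNIV (column_entry V k)"
proof -
  obtain C where C: "C \<ge> 0" "\<And>f. f \<in> ell2 UNIV \<Longrightarrow> norm2 (V f) \<le> C * norm2 f" using bop_bound[OF V] by blast
  show ?thesis unfolding bop_def column_entry_def
  proof (intro conjI ballI allI impI)
    fix f :: "'x vec" assume f: "f \<in> ell2 UNIV"
    show "slice (V f) k \<in> ell2 UNIV" by (rule slice_ell2[OF bopD_ell2[OF V f]])
    show "\<And>c. slice (V (\<lambda>x. c * f x)) k = (\<lambda>y. c * slice (V f) k y)" using f by (simp add: bopD_scale[OF V] slice_def)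
    fix g :: "'x vec" assume g: "g \<in> ell2 UNIV"
    show "slice (V (\<lambda>x. f x + g x)) k = (\<lambda>y. slice (V f) k y + slice (V g) k y)"
      using f g by (simp add: bopD_add[OF V] slice_def)
  next
    show "\<exists>K. \<forall>f\<in>ell2 (UNIV::'x set). norm2 (slice (V f) k) \<le> K * norm2 f"
    proof (intro exI ballI)
      fix f :: "'x vec" assume f: "f \<in> ell2 UNIV"
      show "norm2 (slice (V f) k) \<le> C * norm2 f"
        by (rule order_trans[OF norm2_slice_le[OF bopD_ell2[OF V f]] C(2)[OF f]])
    qed
  next
    fix f :: "'x vec" assume "f \<notin> ell2 UNIV" thus "slice (V f) k = (\<lambda>_. 0)" by (simp add: bopD_outside[OF V] slice_def)
  qed
qed

lemma slice_amp: "F \<in> ell2 (UNIV \<times> J) \<Longrightarrow> slice (amp J a F) k = (if k \<in> J then a (slice F k) else (\<lambda>_. 0))"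
  by (auto simp: amp_def slice_def)

lemma amp_ell2:
  assumes a: "bop UNIV UNIV a" and F: "F \<in> ell2 (UNIV \<times> J)"
  shows "amp J a F \<in> ell2 (UNIV \<times> J)"
proof -
  obtain C where C: "C \<ge> 0" "\<And>f. f \<in> ell2 UNIV \<Longrightarrow> norm2 (a f) \<le> C * norm2 f" using bop_bound[OF a] by blast
  have slice: "\<And>k. slice (amp J a F) k \<in> ell2 UNIV" by (simp add: slice_amp[OF F] bopD_ell2[OF a slice_ell2[OF F]])
  have cmp: "(norm2 (slice (amp J a F) k))^2 \<le> C^2 * (norm2 (slice F k))^2" for k
  proof (cases "k \<in> J")
    case True
    have "(norm2 (a (slice F k)))^2 \<le> (C * norm2 (slice F k))^2"
      by (rule power_mono[OF C(2)[OF slice_ell2[OF F]]]) simp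
    thus ?thesis using True by (simp add: slice_amp[OF F] power_mult_distrib)
  qed (simp add: slice_amp[OF F])
  have s: "(\<lambda>k. (norm2 (slice (amp J a F) k))^2) summable_on UNIV"
    by (rule summable_on_comparison_test[OF summable_on_cmult_right[OF norm2_slice_summable[OF F]]]) (use cmp in auto)
  have out: "\<And>x k. k \<notin> J \<Longrightarrow> amp J a F (x, k) = 0" using F by (simp add: amp_def)
  show ?thesis by (rule ell2_from_slices(1)[OF slice s out])
qed

lemma amp_comp_inj:
  fixes a :: "('x,'x) op"
  assumes j: "j \<in> J" and a: "bop UNIV UNIV a"
  shows "amp J a \<circ> inj j = inj j \<circ> a"
proof (rule ext)
  fix g :: "'x vec"
  show "(amp J a \<circ> inj j) g = (inj j \<circ> a) g"
  proof (cases "g \<in> ell2 UNIV")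
    case True
    have "inj j g \<in> ell2 (UNIV \<times> J)" by (rule inj_ell2(1)[OF j True])
    then show ?thesis using True j bop_zero[OF a] bopD_ell2[OF a True]
      by (auto simp: amp_def inj_def fun_eq_iff slice_def)
  next
    case False
    then show ?thesis using bop_zero[OF a] bopD_outside[OF a False]
      by (auto simp: amp_def inj_def fun_eq_iff)
  qed
qed

lemma commutant_comp: assumes y: "y \<in> commutant UNIV A" and y': "y' \<in> commutant UNIV A"
  shows "y \<circ> y' \<in> commutant UNIV A"
proof -
  have b: "bop UNIV UNIV (y \<circ> y')" using y y' by (auto simp: commutant_def Bop_iff intro: bop_comp)
  have "y \<circ> y' \<circ> a = a \<circ> (y \<circ> y')" if a: "a \<in> A" for a
  proof -
    have c1: "y' \<circ> a = a \<circ> y'" and c2: "y \<circ> a = a \<circ> y" using y y' a by (auto simp: commutant_def)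
    have "y \<circ> y' \<circ> a = y \<circ> (y' \<circ> a)" by (rule comp_assoc)
    also have "\<dots> = (y \<circ> a) \<circ> y'" by (simp only: c1 comp_assoc)
    also have "\<dots> = a \<circ> (y \<circ> y')" by (simp only: c2 comp_assoc)
    finally show ?thesis .
  qed
  thus ?thesis using b by (simp add: commutant_def Bop_iff)
qed

lemma alpha_comp_row_entry:
  fixes U :: "('x \<times> nat, 'x) op" and V :: "('x, 'x \<times> nat) op"
  assumes VU: "V \<circ> U = idop (UNIV \<times> J)" and j: "j \<in> J" and a: "bop UNIV UNIV a"
  shows "(U \<circ> amp J a \<circ> V) \<circ> (U \<circ> inj j) = U \<circ> inj j \<circ> a"
proof -
  have "(U \<circ> amp J a \<circ> V) \<circ> (U \<circ> inj j) = U \<circ> amp J a \<circ> (V \<circ> U) \<circ> inj j" by (simp add: o_assoc)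
  also have "\<dots> = U \<circ> amp J a \<circ> (idop (UNIV \<times> J) \<circ> inj j)" by (simp add: VU o_assoc)
  also have "idop (UNIV \<times> J) \<circ> inj j = inj j" by (rule idop_comp[OF bop_inj[OF j]])
  also have "U \<circ> amp J a \<circ> inj j = U \<circ> (amp J a \<circ> inj j)" by (simp add: o_assoc)
  also have "\<dots> = U \<circ> inj j \<circ> a" by (simp add: amp_comp_inj[OF j a] o_assoc)
  finally show ?thesis .
qed

lemma column_entry_comp_alpha:
  fixes U :: "('x \<times> nat, 'x) op" and V :: "('x, 'x \<times> nat) op"
  assumes V: "bop UNIV (UNIV \<times> J) V" and VU: "V \<circ> U = idop (UNIV \<times> J)" and k: "k \<in> J"
    and a: "bop UNIV UNIV a"
  shows "column_entry V k \<circ> (U \<circ> amp J a \<circ> V) = a \<circ> column_entry V k"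
proof (rule ext)
  fix g :: "'x vec"
  have Vg: "V g \<in> ell2 (UNIV \<times> J)" by (rule bop_ell2[OF V])
  have "(column_entry V k \<circ> (U \<circ> amp J a \<circ> V)) g = slice ((V \<circ> U) (amp J a (V g))) k"
    by (simp add: column_entry_def)
  also have "\<dots> = slice (amp J a (V g)) k" by (simp add: VU idop_def amp_ell2[OF a Vg])
  also have "\<dots> = a (slice (V g) k)" by (simp add: slice_amp[OF Vg] k)
  finally show "(column_entry V k \<circ> (U \<circ> amp J a \<circ> V)) g = (a \<circ> column_entry V k) g"
    by (simp add: column_entry_def)
qed

lemma commutant_compression:
  fixes U :: "('x \<times> nat, 'x) op" and V :: "('x, 'x \<times> nat) op"
  assumes U: "bop (UNIV \<times> J) UNIV U" and V: "bop UNIV (UNIV \<times> J) V" and VU: "V \<circ> U = idop (UNIV \<times> J)"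
    and endo: "\<And>a. a \<in> \<A> \<Longrightarrow> U \<circ> amp J a \<circ> V \<in> \<A>" and AB: "\<A> \<subseteq> Bop UNIV"
    and y: "y \<in> commutant UNIV \<A>" and j: "j \<in> J" and k: "k \<in> J"
  shows "column_entry V k \<circ> y \<circ> (U \<circ> inj j) \<in> commutant UNIV \<A>"
proof -
  have yb: "bop UNIV UNIV y" using y by (simp add: commutant_def Bop_iff)
  have "bop UNIV UNIV (column_entry V k \<circ> y \<circ> (U \<circ> inj j))"
    by (rule bop_comp[OF bop_comp[OF bop_inj[OF j] U] bop_comp[OF yb bop_column_entry[OF V]]])
  moreover have "column_entry V k \<circ> y \<circ> (U \<circ> inj j) \<circ> a = a \<circ> (column_entry V k \<circ> y \<circ> (U \<circ> inj j))"
    if a: "a \<in> \<A>" for a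
  proof -
    have ab: "bop UNIV UNIV a" using a AB by (auto simp: Bop_iff)
    define b where "b = U \<circ> amp J a \<circ> V"
    have yc: "y \<circ> b = b \<circ> y" using y endo[OF a] by (simp add: commutant_def b_def)
    have "column_entry V k \<circ> y \<circ> (U \<circ> inj j) \<circ> a = column_entry V k \<circ> y \<circ> (U \<circ> inj j \<circ> a)"
      by (simp add: o_assoc)
    also have "\<dots> = column_entry V k \<circ> (y \<circ> b) \<circ> (U \<circ> inj j)"
      by (simp add: alpha_comp_row_entry[OF VU j ab, folded b_def, symmetric] o_assoc)
    also have "\<dots> = (column_entry V k \<circ> b) \<circ> y \<circ> (U \<circ> inj j)" by (simp add: yc o_assoc)
    also have "\<dots> = a \<circ> (column_entry V k \<circ> y \<circ> (U \<circ> inj j))"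
      by (simp add: column_entry_comp_alpha[OF V VU k ab, folded b_def] o_assoc)
    finally show ?thesis .
  qed
  ultimately show ?thesis by (simp add: commutant_def Bop_iff)
qed

definition coord_proj :: "nat set \<Rightarrow> nat set \<Rightarrow> ('x \<times> nat, 'x \<times> nat) op" where
  "coord_proj J F = (\<lambda>H. if H \<in> ell2 (UNIV \<times> J) then (\<lambda>p. if snd p \<in> F then H p else 0) else (\<lambda>_. 0))"

lemma coord_proj_ell2: assumes H: "H \<in> ell2 (UNIV \<times> J)" shows "coord_proj J F H \<in> ell2 (UNIV \<times> J)"
  by (simp add: coord_proj_def H) (rule ell2_dominated[OF H], auto simp: ell2_vanishes[OF H])

lemma norm2_coord_proj_le: "H \<in> ell2 (UNIV \<times> J) \<Longrightarrow> norm2 (coord_proj J F H) \<le> norm2 H"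
  by (rule norm2_mono[OF _ coord_proj_ell2]) (auto simp: coord_proj_def)

lemma bop_coord_proj: "bop (UNIV \<times> J) (UNIV \<times> J) (coord_proj J F :: ('x \<times> nat, 'x \<times> nat) op)"
  unfolding bop_def
proof (intro conjI ballI allI impI)
  fix f :: "('x \<times> nat) vec" assume f: "f \<in> ell2 (UNIV \<times> J)"
  show "coord_proj J F f \<in> ell2 (UNIV \<times> J)" by (rule coord_proj_ell2[OF f])
  show "\<And>c. coord_proj J F (\<lambda>x. c * f x) = (\<lambda>y. c * coord_proj J F f y)" using f by (auto simp: coord_proj_def ell2_scale)
  fix g :: "('x \<times> nat) vec" assume g: "g \<in> ell2 (UNIV \<times> J)"
  show "coord_proj J F (\<lambda>x. f x + g x) = (\<lambda>y. coord_proj J F f y + coord_proj J F g y)"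
    using f g by (auto simp: coord_proj_def ell2_add)
next
  show "\<exists>C. \<forall>f\<in>ell2 ((UNIV::'x set) \<times> J). norm2 (coord_proj J F f) \<le> C * norm2 f"
    using norm2_coord_proj_le by (intro exI[of _ 1]) auto
next
  fix f :: "('x \<times> nat) vec" assume "f \<notin> ell2 (UNIV \<times> J)" thus "coord_proj J F f = (\<lambda>_. 0)" by (simp add: coord_proj_def)
qed

text \<open>For a row \<open>U = [u\<^sub>k]\<close> and a column \<open>V = [v\<^sub>k]\<^sup>t\<close> this is \<open>\<Sum>\<^bsub>k \<in> F\<^esub> u\<^sub>k v\<^sub>k z\<close>.\<close>

definition partial_expansion :: "('x \<times> nat, 'x) op \<Rightarrow> ('x, 'x \<times> nat) op \<Rightarrow> ('x,'x) op \<Rightarrow> nat set \<Rightarrow> nat set \<Rightarrow> ('x,'x) op" where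
  "partial_expansion U V z J F = U \<circ> coord_proj J F \<circ> V \<circ> z"

lemma bop_partial_expansion:
  "bop (UNIV \<times> J) UNIV U \<Longrightarrow> bop UNIV (UNIV \<times> J) V \<Longrightarrow> bop UNIV UNIV z \<Longrightarrow> bop UNIV UNIV (partial_expansion U V z J F)"
  unfolding partial_expansion_def by (rule bop_comp[OF _ bop_comp[OF _ bop_comp[OF bop_coord_proj]]])

lemma partial_expansion_empty: "bop (UNIV \<times> J) UNIV U \<Longrightarrow> partial_expansion U V z J {} = ozero"
  by (rule ext) (simp add: partial_expansion_def coord_proj_def ozero_def bop_zero)

lemma partial_expansion_insert:
  assumes U: "bop (UNIV \<times> J) UNIV U" and V: "bop UNIV (UNIV \<times> J) V" and k: "k \<in> J" "k \<notin> F"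
  shows "partial_expansion U V z J (insert k F) = oadd ((U \<circ> inj k) \<circ> (column_entry V k \<circ> z)) (partial_expansion U V z J F)"
proof (rule ext)
  fix g
  let ?H = "V (z g)"
  have H: "?H \<in> ell2 (UNIV \<times> J)" by (rule bop_ell2[OF V])
  have e: "coord_proj J (insert k F) ?H = (\<lambda>p. coord_proj J {k} ?H p + coord_proj J F ?H p)"
    using H k by (auto simp: coord_proj_def fun_eq_iff)
  have s: "coord_proj J {k} ?H = inj k (slice ?H k)"
    using H k slice_ell2[OF H] by (auto simp: coord_proj_def inj_def slice_def fun_eq_iff)
  have "partial_expansion U V z J (insert k F) g = U (\<lambda>p. coord_proj J {k} ?H p + coord_proj J F ?H p)"
    by (simp add: partial_expansion_def e)
  also have "\<dots> = (\<lambda>x. U (coord_proj J {k} ?H) x + U (coord_proj J F ?H) x)"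
    by (rule bopD_add[OF U coord_proj_ell2[OF H] coord_proj_ell2[OF H]])
  finally show "partial_expansion U V z J (insert k F) g
      = oadd ((U \<circ> inj k) \<circ> (column_entry V k \<circ> z)) (partial_expansion U V z J F) g"
    by (simp add: oadd_def s column_entry_def partial_expansion_def)
qed

lemma partial_expansion_weak_tendsto:
  fixes U :: "('x \<times> nat, 'x) op" and V :: "('x, 'x \<times> nat) op"
  assumes U: "bop (UNIV \<times> J) UNIV U" and V: "bop UNIV (UNIV \<times> J) V" and z: "bop UNIV UNIV z"
    and UV: "U \<circ> V = idop UNIV" and f: "f \<in> ell2 UNIV" and h: "h \<in> ell2 UNIV"
  shows "(\<lambda>m. ip f (partial_expansion U V z J (J \<inter> {..<m}) h)) \<longlonglongrightarrow> ip f (z h)"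
proof -
  define Fa where "Fa = adjop (UNIV \<times> J) UNIV U f"
  define H where "H = V (z h)"
  have Fa: "Fa \<in> ell2 (UNIV \<times> J)" unfolding Fa_def by (rule bopD_ell2[OF bop_adjop[OF U] f])
  have H: "H \<in> ell2 (UNIV \<times> J)" unfolding H_def by (rule bop_ell2[OF V])
  have e: "ip f (partial_expansion U V z J F h) = infsum (\<lambda>p. cnj (Fa p) * (if snd p \<in> F then H p else 0)) UNIV" for F
  proof -
    have "ip f (partial_expansion U V z J F h) = ip f (U (coord_proj J F H))" by (simp add: partial_expansion_def H_def)
    also have "\<dots> = ip Fa (coord_proj J F H)" unfolding Fa_def by (rule ip_adjop[OF U f coord_proj_ell2[OF H]])
    finally show ?thesis using H by (simp add: ip_def coord_proj_def)
  qed
  have lim: "ip Fa H = ip f (z h)"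
  proof -
    have "ip Fa H = ip f (U H)" unfolding Fa_def by (rule ip_adjop[OF U f H, symmetric])
    also have "U H = (U \<circ> V) (z h)" by (simp add: H_def)
    also have "\<dots> = z h" by (simp add: UV idop_def bop_ell2[OF z])
    finally show ?thesis .
  qed
  have "(\<lambda>m. infsum (\<lambda>p. cnj (Fa p) * (if snd p \<in> J \<inter> {..<m} then H p else 0)) UNIV) \<longlonglongrightarrow> infsum (\<lambda>p. cnj (Fa p) * H p) UNIV"
  proof (rule infsum_dominated_convergence[OF ip_abs_summable[OF Fa H]])
    show "\<And>m p. cmod (cnj (Fa p) * (if snd p \<in> J \<inter> {..<m} then H p else 0)) \<le> cmod (Fa p) * cmod (H p)"
      by (auto simp: norm_mult)
    fix p :: "'x \<times> nat"
    show "(\<lambda>m. cnj (Fa p) * (if snd p \<in> J \<inter> {..<m} then H p else 0)) \<longlonglongrightarrow> cnj (Fa p) * H p"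
    proof (rule tendsto_eventually)
      show "eventually (\<lambda>m. cnj (Fa p) * (if snd p \<in> J \<inter> {..<m} then H p else 0) = cnj (Fa p) * H p) sequentially"
        unfolding eventually_sequentially
      proof (intro exI[of _ "Suc (snd p)"] allI impI)
        fix m assume "Suc (snd p) \<le> m"
        thus "cnj (Fa p) * (if snd p \<in> J \<inter> {..<m} then H p else 0) = cnj (Fa p) * H p"
          using ell2_vanishes[OF H, of p] by (cases p) auto
      qed
    qed
  qed
  thus ?thesis unfolding e using lim by (simp add: ip_def)
qed

lemma partial_expansion_ip_bound:
  fixes U :: "('x \<times> nat, 'x) op" and V :: "('x, 'x \<times> nat) op"
  assumes U: "bop (UNIV \<times> J) UNIV U" and V: "bop UNIV (UNIV \<times> J) V" and z: "bop UNIV UNIV z"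
  obtains M where "M \<ge> 0" "\<And>F f h. f \<in> ell2 UNIV \<Longrightarrow> h \<in> ell2 UNIV \<Longrightarrow>
     cmod (ip f (partial_expansion U V z J F h)) \<le> M * ((norm2 f)^2 + (norm2 h)^2)"
proof -
  obtain CU where CU: "CU \<ge> 0" "\<And>f. f \<in> ell2 (UNIV \<times> J) \<Longrightarrow> norm2 (U f) \<le> CU * norm2 f" using bop_bound[OF U] by blast
  obtain CV where CV: "CV \<ge> 0" "\<And>f. f \<in> ell2 UNIV \<Longrightarrow> norm2 (V f) \<le> CV * norm2 f" using bop_bound[OF V] by blast
  obtain Cz where Cz: "Cz \<ge> 0" "\<And>f. f \<in> ell2 UNIV \<Longrightarrow> norm2 (z f) \<le> Cz * norm2 f" using bop_bound[OF z] by blast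
  define M where "M = CU^2 + (CV * Cz)^2"
  show ?thesis
  proof (rule that[of M])
    show "M \<ge> 0" by (simp add: M_def)
    fix F and f h :: "'x vec" assume f: "f \<in> ell2 UNIV" and h: "h \<in> ell2 UNIV"
    define Fa where "Fa = adjop (UNIV \<times> J) UNIV U f"
    define H where "H = V (z h)"
    have Fa: "Fa \<in> ell2 (UNIV \<times> J)" unfolding Fa_def by (rule bopD_ell2[OF bop_adjop[OF U] f])
    have H: "H \<in> ell2 (UNIV \<times> J)" unfolding H_def by (rule bop_ell2[OF V])
    have nFa: "norm2 Fa \<le> CU * norm2 f" unfolding Fa_def by (rule adjop_ell2(2)[OF U CU f])
    have nH: "norm2 H \<le> CV * Cz * norm2 h"
    proof -
      have "norm2 H \<le> CV * norm2 (z h)" unfolding H_def by (rule CV(2)[OF bopD_ell2[OF z h]])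
      also have "\<dots> \<le> CV * (Cz * norm2 h)" by (rule mult_left_mono[OF Cz(2)[OF h] CV(1)])
      finally show ?thesis by (simp add: mult.assoc)
    qed
    have nQ: "norm2 (coord_proj J F H) \<le> CV * Cz * norm2 h" by (rule order_trans[OF norm2_coord_proj_le[OF H] nH])
    have "ip f (partial_expansion U V z J F h) = ip Fa (coord_proj J F H)"
      unfolding Fa_def H_def partial_expansion_def o_def by (rule ip_adjop[OF U f coord_proj_ell2[OF bop_ell2[OF V]]])
    hence "cmod (ip f (partial_expansion U V z J F h)) \<le> (1/2) * ((norm2 Fa)^2 + (norm2 (coord_proj J F H))^2)"
      using cmod_ip_le_half_norm2[OF Fa coord_proj_ell2[OF H]] by simp
    also have "\<dots> \<le> (1/2) * ((CU * norm2 f)^2 + (CV * Cz * norm2 h)^2)"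
      by (intro mult_left_mono add_mono power_mono nFa nQ) auto
    also have "\<dots> \<le> M * ((norm2 f)^2 + (norm2 h)^2)"
    proof -
      have a1: "(CU * norm2 f)^2 \<le> M * (norm2 f)^2"
        by (simp add: M_def power_mult_distrib mult_right_mono)
      have a2: "(CV * Cz * norm2 h)^2 \<le> M * (norm2 h)^2"
        by (simp add: M_def power_mult_distrib mult_right_mono)
      have "0 \<le> M * ((norm2 f)^2 + (norm2 h)^2)" by (simp add: M_def)
      thus ?thesis using a1 a2 by (simp add: algebra_simps)
    qed
    finally show "cmod (ip f (partial_expansion U V z J F h)) \<le> M * ((norm2 f)^2 + (norm2 h)^2)" .
  qed
qed

lemma partial_expansion_limit_closedin:
  fixes U :: "('x \<times> nat, 'x) op" and V :: "('x, 'x \<times> nat) op"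
    and X R :: "('x \<times> nat list, 'x \<times> nat list) op"
  assumes U: "bop (UNIV \<times> J) UNIV U" and V: "bop UNIV (UNIV \<times> J) V" and z: "bop UNIV UNIV z"
    and UV: "U \<circ> V = idop UNIV" and g: "word_embedding d \<sigma>"
    and X: "bop (UNIV \<times> words d) (UNIV \<times> words d) X" and R: "bop (UNIV \<times> words d) (UNIV \<times> words d) R"
    and L: "closedin (wstar (UNIV \<times> words d)) L"
    and mem: "\<And>m. X \<circ> tensor_shift d \<sigma> (partial_expansion U V z J (J \<inter> {..<m})) \<circ> R \<in> L"
  shows "X \<circ> tensor_shift d \<sigma> z \<circ> R \<in> L"
proof -
  have Db: "\<And>m. bop UNIV UNIV (partial_expansion U V z J (J \<inter> {..<m}))" by (rule bop_partial_expansion[OF U V z])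
  have inB: "X \<circ> tensor_shift d \<sigma> a \<circ> R \<in> Bop (UNIV \<times> words d)" if "bop UNIV UNIV a" for a
    unfolding Bop_iff by (rule bop_comp[OF R bop_comp[OF bop_tensor_shift[OF g that] X]])
  obtain M where M: "M \<ge> 0" "\<And>F f h. f \<in> ell2 UNIV \<Longrightarrow> h \<in> ell2 UNIV \<Longrightarrow>
     cmod (ip f (partial_expansion U V z J F h)) \<le> M * ((norm2 f)^2 + (norm2 h)^2)"
    using partial_expansion_ip_bound[OF U V z] by blast
  have "X \<circ> tensor_shift d \<sigma> z \<circ> R \<in> wstar (UNIV \<times> words d) closure_of L"
  proof (rule in_wstar_closure_of_seq[OF inB[OF z] mem inB[OF Db]])
    fix \<xi> \<eta> :: "nat \<Rightarrow> ('x \<times> nat list) vec" assume np: "normal_pair (UNIV \<times> words d) \<xi> \<eta>"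
    define \<xi>' where "\<xi>' = (\<lambda>k. adjop (UNIV \<times> words d) (UNIV \<times> words d) X (\<xi> k))"
    define \<eta>' where "\<eta>' = (\<lambda>k. R (\<eta> k))"
    have np1: "normal_pair (UNIV \<times> words d) \<xi> \<eta>'" unfolding \<eta>'_def by (rule normal_pair_map_right[OF np R])
    have np2: "normal_pair (UNIV \<times> words d) \<xi>' \<eta>'"
      unfolding \<xi>'_def by (rule normal_pair_map_left[OF np1 bop_adjop[OF X]])
    have eq: "nfun \<xi> \<eta> (X \<circ> tensor_shift d \<sigma> a \<circ> R) = nfun \<xi>' \<eta>' (tensor_shift d \<sigma> a)" if a: "bop UNIV UNIV a" for a
    proof -
      have "nfun \<xi> \<eta> (X \<circ> tensor_shift d \<sigma> a \<circ> R) = nfun \<xi> \<eta>' (X \<circ> tensor_shift d \<sigma> a)"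
        unfolding \<eta>'_def by (rule nfun_comp_right)
      also have "\<dots> = nfun \<xi>' \<eta>' (tensor_shift d \<sigma> a)"
        unfolding \<xi>'_def by (rule nfun_comp_left[OF np1 X bop_tensor_shift[OF g a]])
      finally show ?thesis .
    qed
    show "(\<lambda>m. nfun \<xi> \<eta> (X \<circ> tensor_shift d \<sigma> (partial_expansion U V z J (J \<inter> {..<m})) \<circ> R))
        \<longlonglongrightarrow> nfun \<xi> \<eta> (X \<circ> tensor_shift d \<sigma> z \<circ> R)"
      unfolding eq[OF Db] eq[OF z]
      by (rule nfun_tensor_shift_tendsto[OF g np2 Db z partial_expansion_weak_tendsto[OF U V z UV] M(1) M(2)])
  qed
  thus ?thesis using L by (simp add: closure_of_closedin)
qed

lemma tensor_shift_row_expansion_closedin: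
  fixes U :: "('x \<times> nat, 'x) op" and V :: "('x, 'x \<times> nat) op"
    and X R :: "('x \<times> nat list, 'x \<times> nat list) op"
  assumes U: "bop (UNIV \<times> J) UNIV U" and V: "bop UNIV (UNIV \<times> J) V" and UV: "U \<circ> V = idop UNIV"
    and z: "bop UNIV UNIV z" and g: "word_embedding d \<sigma>"
    and X: "bop (UNIV \<times> words d) (UNIV \<times> words d) X" and R: "bop (UNIV \<times> words d) (UNIV \<times> words d) R"
    and L: "op_subspace (UNIV \<times> words d) L" "closedin (wstar (UNIV \<times> words d)) L"
    and terms: "\<And>k. k \<in> J \<Longrightarrow> X \<circ> tensor_shift d \<sigma> (U \<circ> inj k \<circ> (column_entry V k \<circ> z)) \<circ> R \<in> L"
  shows "X \<circ> tensor_shift d \<sigma> z \<circ> R \<in> L"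
proof (rule partial_expansion_limit_closedin[OF U V z UV g X R L(2)])
  have "X \<circ> tensor_shift d \<sigma> (partial_expansion U V z J F) \<circ> R \<in> L" if "finite F" "F \<subseteq> J" for F
    using that
  proof (induction F rule: finite_induct)
    case empty
    then show ?case
      using L(1) by (simp add: partial_expansion_empty[OF U] tensor_shift_ozero comp_ozero[OF X] ozero_comp op_subspace_def)
  next
    case (insert k F)
    have k: "k \<in> J" using insert.prems by simp
    have summand: "bop UNIV UNIV (U \<circ> inj k \<circ> (column_entry V k \<circ> z))"
      by (rule bop_comp[OF bop_comp[OF z bop_column_entry[OF V]] bop_comp[OF bop_inj[OF k] U]])
    have eq: "X \<circ> tensor_shift d \<sigma> (partial_expansion U V z J (insert k F)) \<circ> R
        = oadd (X \<circ> tensor_shift d \<sigma> (U \<circ> inj k \<circ> (column_entry V k \<circ> z)) \<circ> R)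
               (X \<circ> tensor_shift d \<sigma> (partial_expansion U V z J F) \<circ> R)"
      unfolding partial_expansion_insert[OF U V k insert.hyps(2)] tensor_shift_oadd oadd_comp
        comp_oadd_right[OF X bop_tensor_shift[OF g summand] bop_tensor_shift[OF g bop_partial_expansion[OF U V z]]] ..
    show ?case
      using L(1) terms[OF k] insert.IH insert.prems unfolding eq op_subspace_def by blast
  qed
  then show "X \<circ> tensor_shift d \<sigma> (partial_expansion U V z J (J \<inter> {..<m})) \<circ> R \<in> L" for m
    by simp
qed

section \<open>Products of generators\<close>

definition word_op :: "enat \<Rightarrow> (nat \<Rightarrow> nat list \<Rightarrow> nat list) \<Rightarrow> (nat \<Rightarrow> ('x \<times> nat, 'x) op) \<Rightarrow> (nat \<times> nat) list
    \<Rightarrow> ('x \<times> nat list, 'x \<times> nat list) op" where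
  "word_op d sh U ws = foldr (\<lambda>(i,j) T. tensor_shift d (sh i) (entry U i j) \<circ> T) ws (idop (UNIV \<times> words d))"

lemma word_op_Nil: "word_op d sh U [] = idop (UNIV \<times> words d)"
  by (simp add: word_op_def)

lemma word_op_Cons: "word_op d sh U ((i,j) # ws) = tensor_shift d (sh i) (entry U i j) \<circ> word_op d sh U ws"
  by (simp add: word_op_def)

lemma word_op_snoc:
  assumes "bop (UNIV \<times> words d) (UNIV \<times> words d) (tensor_shift d (sh i) (entry U i k))"
  shows "word_op d sh U (ws @ [(i,k)]) = word_op d sh U ws \<circ> tensor_shift d (sh i) (entry U i k)"
proof (induction ws)
  case Nil
  then show ?case by (simp add: word_op_Cons word_op_Nil comp_idop[OF assms] idop_comp[OF assms])
next
  case (Cons p ws)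
  then show ?case by (cases p) (simp add: word_op_Cons o_assoc)
qed

lemma Nwords_Cons: "(i,j) # ws \<in> Nwords d n \<longleftrightarrow> i \<in> idx d \<and> j \<in> idx (n i) \<and> ws \<in> Nwords d n"
  by (simp add: Nwords_def)

lemma Nwords_snoc: "ws \<in> Nwords d n \<Longrightarrow> i \<in> idx d \<Longrightarrow> k \<in> idx (n i) \<Longrightarrow> ws @ [(i,k)] \<in> Nwords d n"
  by (simp add: Nwords_def)

lemma bop_entry: "bop (UNIV \<times> idx (n i)) UNIV (U i) \<Longrightarrow> j \<in> idx (n i) \<Longrightarrow> bop UNIV UNIV (entry U i j)"
  unfolding entry_def by (rule bop_comp[OF bop_inj])

lemma bop_rho: "bop UNIV UNIV y \<Longrightarrow> bop (UNIV \<times> words d) (UNIV \<times> words d) (rho d y)"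
  unfolding rho_eq_tensor_shift by (rule bop_tensor_shift[OF word_embedding_id])

definition word_gens :: "enat \<Rightarrow> (nat \<Rightarrow> enat) \<Rightarrow> (nat \<Rightarrow> nat list \<Rightarrow> nat list) \<Rightarrow> (nat \<Rightarrow> ('x \<times> nat, 'x) op)
    \<Rightarrow> ('x,'x) op set \<Rightarrow> ('x \<times> nat list, 'x \<times> nat list) op set" where
  "word_gens d n sh U \<A> = {word_op d sh U ws \<circ> rho d y | ws y. ws \<in> Nwords d n \<and> y \<in> commutant UNIV \<A>}"

locale invertible_rows =
  fixes \<A> :: "('x,'x) op set" and d :: enat and n :: "nat \<Rightarrow> enat"
    and U :: "nat \<Rightarrow> ('x \<times> nat, 'x) op" and V :: "nat \<Rightarrow> ('x, 'x \<times> nat) op"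
    and sh :: "nat \<Rightarrow> nat list \<Rightarrow> nat list"
  assumes alg_bop: "\<A> \<subseteq> Bop UNIV"
    and U_bop: "\<And>i. i \<in> idx d \<Longrightarrow> bop (UNIV \<times> idx (n i)) UNIV (U i)"
    and V_bop: "\<And>i. i \<in> idx d \<Longrightarrow> bop UNIV (UNIV \<times> idx (n i)) (V i)"
    and VU: "\<And>i. i \<in> idx d \<Longrightarrow> V i \<circ> U i = idop (UNIV \<times> idx (n i))"
    and UV: "\<And>i. i \<in> idx d \<Longrightarrow> U i \<circ> V i = idop UNIV"
    and alpha_closed: "\<And>i a. i \<in> idx d \<Longrightarrow> a \<in> \<A> \<Longrightarrow> alpha n U V i a \<in> \<A>"
    and sh: "\<And>i. i \<in> idx d \<Longrightarrow> word_embedding d (sh i)"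
begin

lemma commutant_bop: "y \<in> commutant UNIV \<A> \<Longrightarrow> bop UNIV UNIV y"
  by (simp add: commutant_def Bop_iff)

lemma bop_word_op: "ws \<in> Nwords d n \<Longrightarrow> bop (UNIV \<times> words d) (UNIV \<times> words d) (word_op d sh U ws)"
proof (induction ws)
  case Nil
  then show ?case by (simp add: word_op_Nil bop_idop)
next
  case (Cons p ws)
  then obtain i j where p: "p = (i,j)" and h: "i \<in> idx d" "j \<in> idx (n i)" "ws \<in> Nwords d n"
    by (cases p) (auto simp: Nwords_Cons)
  show ?case unfolding p word_op_Cons
    by (rule bop_comp[OF Cons.IH[OF h(3)] bop_tensor_shift[OF sh[OF h(1)] bop_entry[of n i U, OF U_bop[OF h(1)] h(2)]]])
qed

lemma compression_in_commutant:
  assumes "i \<in> idx d" "j \<in> idx (n i)" "k \<in> idx (n i)" "y \<in> commutant UNIV \<A>"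
  shows "column_entry (V i) k \<circ> (y \<circ> entry U i j) \<in> commutant UNIV \<A>"
proof -
  have "U i \<circ> amp (idx (n i)) a \<circ> V i \<in> \<A>" if "a \<in> \<A>" for a
    using alpha_closed[OF assms(1) that] by (simp add: alpha_def)
  then show ?thesis
    using commutant_compression[OF U_bop[OF assms(1)] V_bop[OF assms(1)] VU[OF assms(1)] _ alg_bop assms(4) assms(2,3)]
    by (simp add: entry_def o_assoc)
qed

lemma word_gens_Bop: "word_gens d n sh U \<A> \<subseteq> Bop (UNIV \<times> words d)"
  unfolding word_gens_def by (auto simp: Bop_iff intro!: bop_comp[OF bop_rho[OF commutant_bop] bop_word_op])

lemma word_gens_comp_rho:
  assumes "ws \<in> Nwords d n" "y \<in> commutant UNIV \<A>" "y' \<in> commutant UNIV \<A>"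
  shows "word_op d sh U ws \<circ> rho d y \<circ> word_op d sh U [] \<circ> rho d y' \<in> word_gens d n sh U \<A>"
proof -
  have "word_op d sh U ws \<circ> rho d y \<circ> word_op d sh U [] \<circ> rho d y' = word_op d sh U ws \<circ> (rho d y \<circ> rho d y')"
    using idop_comp[OF bop_rho[OF commutant_bop[OF assms(3)]]] by (simp add: word_op_Nil o_assoc[symmetric])
  also have "\<dots> = word_op d sh U ws \<circ> rho d (y \<circ> y')"
    using tensor_shift_comp[OF word_embedding_id word_embedding_id commutant_bop[OF assms(2)] commutant_bop[OF assms(3)]]
    by (simp add: rho_eq_tensor_shift)
  finally show ?thesis
    unfolding word_gens_def using assms(1) commutant_comp[OF assms(2,3)] by blast
qed

abbreviation gens_wspan where "gens_wspan \<equiv> wspan (UNIV \<times> words d) (word_gens d n sh U \<A>)"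

lemma word_gens_comp_in_wspan:
  assumes "ws' \<in> Nwords d n" "y' \<in> commutant UNIV \<A>" "ws \<in> Nwords d n" "y \<in> commutant UNIV \<A>"
  shows "word_op d sh U ws \<circ> rho d y \<circ> word_op d sh U ws' \<circ> rho d y' \<in> gens_wspan"
  using assms(1,3,4)
proof (induction ws' arbitrary: ws y)
  case Nil
  then show ?case using word_gens_comp_rho[OF Nil(2,3) assms(2)] wspan_superset[OF word_gens_Bop] by blast
next
  case (Cons p rest)
  then obtain i j where p: "p = (i,j)" and h: "i \<in> idx d" "j \<in> idx (n i)" "rest \<in> Nwords d n"
    by (cases p) (auto simp: Nwords_Cons)
  define z where "z = y \<circ> entry U i j"
  define X where "X = word_op d sh U ws"
  define R where "R = word_op d sh U rest \<circ> rho d y'"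
  have u: "\<And>k. k \<in> idx (n i) \<Longrightarrow> bop UNIV UNIV (entry U i k)"
    by (rule bop_entry[of n i U, OF U_bop[OF h(1)]])
  have y: "bop UNIV UNIV y" by (rule commutant_bop[OF Cons.prems(3)])
  have z: "bop UNIV UNIV z" unfolding z_def by (rule bop_comp[OF u[OF h(2)] y])
  have X: "bop (UNIV \<times> words d) (UNIV \<times> words d) X" unfolding X_def by (rule bop_word_op[OF Cons.prems(2)])
  have R: "bop (UNIV \<times> words d) (UNIV \<times> words d) R"
    unfolding R_def by (rule bop_comp[OF bop_rho[OF commutant_bop[OF assms(2)]] bop_word_op[OF h(3)]])
  have "word_op d sh U ws \<circ> rho d y \<circ> word_op d sh U (p # rest) \<circ> rho d y'
      = X \<circ> (tensor_shift d id y \<circ> tensor_shift d (sh i) (entry U i j)) \<circ> R"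
    by (simp add: p word_op_Cons X_def R_def rho_eq_tensor_shift o_assoc)
  also have "\<dots> = X \<circ> tensor_shift d (sh i) z \<circ> R"
    using tensor_shift_comp[OF word_embedding_id sh[OF h(1)] y u[OF h(2)]] by (simp add: z_def)
  also have "\<dots> \<in> gens_wspan"
  proof (rule tensor_shift_row_expansion_closedin[OF U_bop[OF h(1)] V_bop[OF h(1)] UV[OF h(1)] z sh[OF h(1)] X R])
    show "op_subspace (UNIV \<times> words d) gens_wspan" by (rule op_subspace_wspan[OF word_gens_Bop])
    show "closedin (wstar (UNIV \<times> words d)) gens_wspan" by (simp add: wspan_def)
    fix k assume k: "k \<in> idx (n i)"
    define yk where "yk = column_entry (V i) k \<circ> z"
    have yk: "yk \<in> commutant UNIV \<A>"
      unfolding yk_def z_def by (rule compression_in_commutant[OF h(1,2) k Cons.prems(3)])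
    have "X \<circ> tensor_shift d (sh i) (U i \<circ> inj k \<circ> yk) \<circ> R
        = X \<circ> (tensor_shift d (sh i) (entry U i k) \<circ> tensor_shift d id yk) \<circ> R"
      using tensor_shift_comp[OF sh[OF h(1)] word_embedding_id u[OF k] commutant_bop[OF yk]]
      by (simp add: entry_def)
    also have "\<dots> = word_op d sh U (ws @ [(i,k)]) \<circ> rho d yk \<circ> word_op d sh U rest \<circ> rho d y'"
      using word_op_snoc[of d sh i U k ws, OF bop_tensor_shift[OF sh[OF h(1)] u[OF k]]]
      by (simp add: X_def R_def rho_eq_tensor_shift o_assoc)
    also have "\<dots> \<in> gens_wspan"
      by (rule Cons.IH[OF h(3) Nwords_snoc[OF Cons.prems(2) h(1) k] yk])
    finally show "X \<circ> tensor_shift d (sh i) (U i \<circ> inj k \<circ> (column_entry (V i) k \<circ> z)) \<circ> R \<in> gens_wspan"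
      by (simp add: yk_def)
  qed
  finally show ?case .
qed

lemma wspan_eq_walg_word_gens:
  "wspan (UNIV \<times> words d) (word_gens d n sh U \<A>) = walg (UNIV \<times> words d) (word_gens d n sh U \<A>)"
proof (rule wspan_eq_walg[OF word_gens_Bop])
  fix a b assume "a \<in> word_gens d n sh U \<A>" "b \<in> word_gens d n sh U \<A>"
  then obtain ws y ws' y' where "a = word_op d sh U ws \<circ> rho d y" "b = word_op d sh U ws' \<circ> rho d y'"
    and "ws \<in> Nwords d n" "y \<in> commutant UNIV \<A>" "ws' \<in> Nwords d n" "y' \<in> commutant UNIV \<A>"
    unfolding word_gens_def by blast
  then show "a \<circ> b \<in> gens_wspan"
    using word_gens_comp_in_wspan by (simp add: o_assoc)
qed

end

theorem proposition3p9:
  fixes \<A> :: "('x,'x) op set"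
    and d :: enat
    and n :: "nat \<Rightarrow> enat"
    and U :: "nat \<Rightarrow> ('x \<times> nat, 'x) op"
    and V :: "nat \<Rightarrow> ('x, 'x \<times> nat) op"
  assumes d_pos: "d \<ge> 1"
    and n_pos: "\<forall>i \<in> idx d. n i \<ge> 1"
    and alg: "unital_wstar_alg UNIV \<A>"
    and U_bop: "\<forall>i \<in> idx d. bop (UNIV \<times> idx (n i)) UNIV (U i)"
    and V_bop: "\<forall>i \<in> idx d. bop UNIV (UNIV \<times> idx (n i)) (V i)"
    and VU: "\<forall>i \<in> idx d. V i \<circ> U i = idop (UNIV \<times> idx (n i))"
    and UV: "\<forall>i \<in> idx d. U i \<circ> V i = idop UNIV"
    and endo: "\<forall>i \<in> idx d. unital_endo \<A> (alpha n U V i)"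
    and wcont: "\<forall>i \<in> idx d. wstar_continuous \<A> (alpha n U V i)"
    and cb: "\<forall>i \<in> idx d. completely_bounded \<A> (alpha n U V i)"
    and sup_bound: "\<exists>C. \<forall>\<mu> \<in> words d. \<forall>a \<in> \<A>.
                      opnorm UNIV (alpha_word n U V \<mu> a) \<le> C * opnorm UNIV a"
  shows "wspan (UNIV \<times> words d)
           {Vw d U ws \<circ> rho d y | ws y. ws \<in> Nwords d n \<and> y \<in> commutant UNIV \<A>}
         = walg (UNIV \<times> words d)
           {Vw d U ws \<circ> rho d y | ws y. ws \<in> Nwords d n \<and> y \<in> commutant UNIV \<A>}
       \<and> wspan (UNIV \<times> words d)
           {Ww d U ws \<circ> rho d y | ws y. ws \<in> Nwords d n \<and> y \<in> commutant UNIV \<A>}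
         = walg (UNIV \<times> words d)
           {Ww d U ws \<circ> rho d y | ws y. ws \<in> Nwords d n \<and> y \<in> commutant UNIV \<A>}"
proof -
  have rows: "invertible_rows \<A> d n U V sh" if "\<And>i. i \<in> idx d \<Longrightarrow> word_embedding d (sh i)" for sh
    using alg U_bop V_bop VU UV endo that
    by unfold_locales (auto simp: unital_wstar_alg_def subalg_def unital_endo_def)
  have "Vw d U ws = word_op d (\<lambda>i. (#) i) U ws" for ws
    by (simp add: Vw_def word_op_def tensl_eq_tensor_shift)
  moreover have "Ww d U ws = word_op d (\<lambda>i w. w @ [i]) U ws" for ws
    by (simp add: Ww_def word_op_def tensr_eq_tensor_shift)
  ultimately show ?thesis
    using invertible_rows.wspan_eq_walg_word_gens[OF rows[OF word_embedding_Cons]]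
      invertible_rows.wspan_eq_walg_word_gens[OF rows[OF word_embedding_snoc]]
    by (simp add: word_gens_def)
qed

end
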